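(* Let $1\le k\le r-1$ and let $\lambda$ be a $(k,r)$-admissible Young diagram with $n$ boxes. Then the $r$-conjugate $\lambda_r^*$ is $(r-k,r)$-admissible and the representation $\rho_{\lambda_r^*}^{(r-k,r)}$ of $B_n$ is equivalent to $\chi\otimes(\rho_\lambda^{(k,r)})^*$, where $(\rho_\lambda^{(k,r)})^*$ is the contragredient representation and $\chi:B_n\to U(1)$ is the character with $\chi(\sigma_i)=-q$ for all $i$.
   Context: Fix an integer $r\ge 3$ and let $q=e^{2\pi i/r}$ or $q=e^{-2\pi i/r}$, with $q^{1/2}=e^{\pm\pi i/r}$ (same sign). Quantum integers: $[m]=\frac{q^{m/2}-q^{-m/2}}{q^{1/2}-q^{-1/2}}$. A Young diagram $\lambda=[\lambda_1,\dots,\lambda_k]$, $\lambda_1\ge\dots\ge\lambda_k\ge0$, has $n=\sum\lambda_i$ boxes; a standard tableau is a filling by $1,\dots,n$ increasing along rows and columns. For $r\ge k+1$, $\lambda$ (at most $k$ rows) is $(k,r)$-admissible if $\lambda_1-\lambda_k\le r-k$. For a standard tableau $t$, $t^{(i)}$ is obtained by deleting boxes containing $n,\dots,n-i+1$; $t$ is $(k,r)$-admissible if every $t^{(i)}$ has $(k,r)$-admissible shape. If entries $m,m'$ lie in rows $r_1,r_2$ and columns $c_1,c_2$, $d_{t,m,m'}=(c_1-c_2)-(r_1-r_2)$; with $d=d_{t,i,i+1}$ put $\alpha_{t,i}=\frac{[d+1]}{[2][d]}$, $\beta_{t,i}=\sqrt{\alpha_{t,i}(1-\alpha_{t,i})}$.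 $V_\lambda^{(k,r)}$ has orthonormal basis $\{v_t\}$ over $(k,r)$-admissible standard tableaux $t$ of shape $\lambda$; $s_i(t)$ swaps $i,i+1$; $E_iv_t=\alpha_{t,i}v_t+\beta_{t,i}v_{s_i(t)}$ if $s_i(t)$ is an admissible standard tableau, else $E_iv_t=\alpha_{t,i}v_t$. The Jones–Wenzl sector $\rho_\lambda^{(k,r)}:B_n\to U(V_\lambda^{(k,r)})$ is $\sigma_i\mapsto q\,\mathrm{Id}-(1+q)E_i$. $r$-tile and $r$-conjugate: for a $(k,r)$-admissible $\lambda$ with $k$ rows and $l=r-k$, $T_\lambda$ is the $k\times l$ matrix with entries $t_{ij}=\lfloor(\lambda_i+l-j)/l\rfloor$; the $r$-conjugate $\lambda_r^*$ is the Young diagram (with at most $l$ rows) whose $i$-th row has $\sum_{j=1}^{k}t_{ji}$ boxes, i.e. the diagram associated with the transpose of $T_\lambda$ (a diagram associated with a tile has $i$-th row length equal to the $i$-th row sum of the tile). *)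

theory Defs
  imports Complex_Main
begin

text \<open>s plays the role of q^(1/2), so q = s^2.\<close>
definition qint :: "complex \<Rightarrow> int \<Rightarrow> complex" where
  "qint s m = (s powi m - s powi (-m)) / (s - inverse s)"

text \<open>A Young diagram with at most k rows is a nonincreasing list of length k
  (padded with zeros); row a (0-indexed) has lam!a boxes.\<close>
definition young :: "nat list \<Rightarrow> bool" where
  "young lam = (\<forall>a b. a \<le> b \<longrightarrow> b < length lam \<longrightarrow> lam ! b \<le> lam ! a)"

definition young_adm :: "nat \<Rightarrow> nat \<Rightarrow> nat list \<Rightarrow> bool" where
  "young_adm k r lam = (young lam \<and> length lam = k \<and>
     (0 < k \<longrightarrow> lam ! 0 - lam ! (k - 1) \<le> r - k))"

definition boxes :: "nat list \<Rightarrow> (nat \<times> nat) set" where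
  "boxes lam = {(a, b). a < length lam \<and> b < lam ! a}"

text \<open>A tableau with n entries is a list t of length n; t!(m-1) is the
  (row, column) position (0-indexed) of the entry m.\<close>
definition standard_tableau :: "nat list \<Rightarrow> (nat \<times> nat) list \<Rightarrow> bool" where
  "standard_tableau lam t =
     (length t = sum_list lam \<and> distinct t \<and> set t = boxes lam \<and>
      (\<forall>m < length t. \<forall>m' < length t.
         ((fst (t ! m) = fst (t ! m') \<and> snd (t ! m) < snd (t ! m')) \<longrightarrow> m < m') \<and>
         ((snd (t ! m) = snd (t ! m') \<and> fst (t ! m) < fst (t ! m')) \<longrightarrow> m < m')))"

text \<open>Shape of t^(i) (entries n-i+1,...,n removed) where p = n - i, as a
  k-row diagram.\<close>
definition sub_shape :: "nat \<Rightarrow> (nat \<times> nat) list \<Rightarrow> nat \<Rightarrow> nat list" where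
  "sub_shape k t p = map (\<lambda>a. card {m. m < p \<and> fst (t ! m) = a}) [0..<k]"

definition adm_tableau :: "nat \<Rightarrow> nat \<Rightarrow> (nat \<times> nat) list \<Rightarrow> bool" where
  "adm_tableau k r t = (\<forall>p \<le> length t. young_adm k r (sub_shape k t p))"

definition tabs :: "nat \<Rightarrow> nat \<Rightarrow> nat list \<Rightarrow> (nat \<times> nat) list set" where
  "tabs k r lam = {t. standard_tableau lam t \<and> adm_tableau k r t}"

text \<open>s_i swaps the entries i and i+1.\<close>
definition swp :: "nat \<Rightarrow> (nat \<times> nat) list \<Rightarrow> (nat \<times> nat) list" where
  "swp i t = t[i - 1 := t ! i, i := t ! (i - 1)]"

text \<open>d_{t,m,m'} for entries m, m' (1-based).\<close>
definition dist :: "(nat \<times> nat) list \<Rightarrow> nat \<Rightarrow> nat \<Rightarrow> int" where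
  "dist t m m' = (int (snd (t ! (m - 1))) - int (snd (t ! (m' - 1))))
               - (int (fst (t ! (m - 1))) - int (fst (t ! (m' - 1))))"

definition alpha :: "complex \<Rightarrow> (nat \<times> nat) list \<Rightarrow> nat \<Rightarrow> complex" where
  "alpha s t i = (let d = dist t i (i + 1) in qint s (d + 1) / (qint s 2 * qint s d))"

text \<open>alpha is real for q a root of unity; beta is the real square root.\<close>
definition beta :: "complex \<Rightarrow> (nat \<times> nat) list \<Rightarrow> nat \<Rightarrow> complex" where
  "beta s t i = complex_of_real (sqrt (Re (alpha s t i * (1 - alpha s t i))))"

text \<open>Matrix entry (u, t) = coefficient of v_u in E_i v_t.\<close>
definition Emat :: "complex \<Rightarrow> nat \<Rightarrow> nat \<Rightarrow> nat list \<Rightarrow> nat \<Rightarrow>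
    (nat \<times> nat) list \<Rightarrow> (nat \<times> nat) list \<Rightarrow> complex" where
  "Emat s k r lam i u t =
     (if u = t then alpha s t i
      else if u = swp i t \<and> swp i t \<in> tabs k r lam then beta s t i else 0)"

definition rho :: "complex \<Rightarrow> nat \<Rightarrow> nat \<Rightarrow> nat list \<Rightarrow> nat \<Rightarrow>
    (nat \<times> nat) list \<Rightarrow> (nat \<times> nat) list \<Rightarrow> complex" where
  "rho s k r lam i u t =
     (s\<^sup>2 * (if u = t then 1 else 0) - (1 + s\<^sup>2) * Emat s k r lam i u t)"

definition mat_inv :: "'a set \<Rightarrow> ('a \<Rightarrow> 'a \<Rightarrow> complex) \<Rightarrow> 'a \<Rightarrow> 'a \<Rightarrow> complex" where
  "mat_inv S A = (THE B. (\<forall>u v. (u \<notin> S \<or> v \<notin> S) \<longrightarrow> B u v = 0) \<and>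
      (\<forall>u\<in>S. \<forall>w\<in>S. (\<Sum>v\<in>S. B u v * A v w) = (if u = w then 1 else 0)) \<and>
      (\<forall>u\<in>S. \<forall>w\<in>S. (\<Sum>v\<in>S. A u v * B v w) = (if u = w then 1 else 0)))"

definition contragr :: "'a set \<Rightarrow> ('a \<Rightarrow> 'a \<Rightarrow> complex) \<Rightarrow> 'a \<Rightarrow> 'a \<Rightarrow> complex" where
  "contragr S A = (\<lambda>u w. mat_inv S A w u)"

text \<open>Two matrix representations of B_n, given by the images R1 i, R2 i of the
  generators sigma_i (1 \<le> i \<le> n-1) on bases indexed by S1, S2, are equivalent:
  there is an invertible intertwiner P : span S1 \<rightarrow> span S2.\<close>
definition equiv_reps :: "nat \<Rightarrow> 'a set \<Rightarrow> (nat \<Rightarrow> 'a \<Rightarrow> 'a \<Rightarrow> complex) \<Rightarrow>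
    'b set \<Rightarrow> (nat \<Rightarrow> 'b \<Rightarrow> 'b \<Rightarrow> complex) \<Rightarrow> bool" where
  "equiv_reps n S1 R1 S2 R2 =
    (\<exists>(P :: 'b \<Rightarrow> 'a \<Rightarrow> complex) (Q :: 'a \<Rightarrow> 'b \<Rightarrow> complex).
      (\<forall>u\<in>S2. \<forall>w\<in>S2. (\<Sum>v\<in>S1. P u v * Q v w) = (if u = w then 1 else 0)) \<and>
      (\<forall>u\<in>S1. \<forall>w\<in>S1. (\<Sum>v\<in>S2. Q u v * P v w) = (if u = w then 1 else 0)) \<and>
      (\<forall>i \<in> {1..<n}. \<forall>u\<in>S2. \<forall>t\<in>S1.
         (\<Sum>v\<in>S2. R2 i u v * P v t) = (\<Sum>v\<in>S1. P u v * R1 i v t)))"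

text \<open>For lam with k rows and l = r - k: t_ij = floor((lam_i + l - j)/l),
  row i of lam_r^* has sum_j t_ji boxes (i, j 1-based).\<close>
definition rtile :: "nat \<Rightarrow> nat list \<Rightarrow> nat \<Rightarrow> nat \<Rightarrow> nat" where
  "rtile r lam i j = (let l = r - length lam in (lam ! (i - 1) + l - j) div l)"

definition rconj :: "nat \<Rightarrow> nat list \<Rightarrow> nat list" where
  "rconj r lam = map (\<lambda>i. \<Sum>j = 1..length lam. rtile r lam j i) [1..<r - length lam + 1]"

end

theory Submission
  imports Defs "HOL-Library.Multiset" "HOL-Library.Nat_Bijection"
begin

text \<open>Put \<open>l = r - k\<close>. The box in row \<open>a\<close> and column \<open>c\<close> of a \<open>k\<close>-row diagram is sent to
  row \<open>c mod l\<close> and column \<open>(c div l) k + a\<close>. Applied entrywise this maps the admissible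
  tableaux of \<open>lam\<close> bijectively onto those of its \<open>r\<close>-conjugate: the shapes along the way are
  the \<open>r\<close>-conjugates of the original ones, and each box still lands at the end of its row.
  The map replaces every axial distance \<open>d\<close> by \<open>-d\<close> modulo \<open>r\<close>; as \<open>alpha\<close> depends on
  \<open>d\<close> modulo \<open>r\<close> only and \<open>alpha(-d) = 1 - alpha(d)\<close>, in the transported basis, rescaled by the
  sign of the inversions of each tableau, the conjugate's \<open>E\<^sub>i\<close> becomes \<open>1 - E\<^sub>i\<^sup>T\<close>.
  Since \<open>E\<^sub>i\<close> is idempotent, \<open>q (q - (1 + q) E\<^sub>i)\<^sup>-\<^sup>1 = 1 - (1 + q) E\<^sub>i\<close>, so the conjugate's
  \<open>q - (1 + q) (1 - E\<^sub>i\<^sup>T)\<close> equals \<open>-q\<close> times the transposed inverse of \<open>rho(sigma\<^sub>i)\<close>.\<close>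

section \<open>Quantum integers at a root of unity\<close>

definition qreal :: "nat \<Rightarrow> int \<Rightarrow> real" where
  "qreal r m = sin (of_int m * (pi / r)) / sin (pi / r)"

definition qalpha :: "nat \<Rightarrow> int \<Rightarrow> real" where
  "qalpha r d = qreal r (d + 1) / (qreal r 2 * qreal r d)"

lemma qint_cis:
  assumes "sin x \<noteq> 0"
  shows "qint (cis x) m = of_real (sin (of_int m * x) / sin x)"
proof -
  have power: "cis x powi n = cis (of_int n * x)" for n
    by (simp add: cis_conv_exp exp_power_int algebra_simps)
  have diff: "cis y - cis (- y) = 2 * \<i> * complex_of_real (sin y)" for y
    by (simp add: complex_eq_iff)
  have "qint (cis x) m = (cis (of_int m * x) - cis (- (of_int m * x))) / (cis x - cis (- x))"
    unfolding qint_def power by simp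
  also have "\<dots> = of_real (sin (of_int m * x) / sin x)"
    unfolding diff using assms by (simp add: field_simps)
  finally show ?thesis .
qed

lemma qreal_uminus: "qreal r (- m) = - qreal r m"
  by (simp add: qreal_def)

lemma qreal_0 [simp]: "qreal r 0 = 0"
  by (simp add: qreal_def)

lemma qreal_add_r:
  assumes "0 < r"
  shows "qreal r (m + int r) = - qreal r m"
proof -
  have "of_int (m + int r) * (pi / r) = of_int m * (pi / r) + pi"
    using assms by (simp add: field_simps)
  then show ?thesis
    by (simp add: qreal_def)
qed

context
  fixes r :: nat
  assumes r: "2 \<le> r"
begin

lemma sin_pi_div_pos: "0 < sin (pi / r)"
  using r by (intro sin_gt_zero) (auto simp: field_simps)

lemma qint_eq_qreal:
  assumes "s = exp (complex_of_real pi * \<i> / of_nat r) \<or> s = exp (- complex_of_real pi * \<i> / of_nat r)"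
  shows "qint s m = of_real (qreal r m)"
proof -
  from assms have "s = cis (pi / r) \<or> s = cis (- (pi / r))"
    by (auto simp: cis_conv_exp mult.commute)
  then show ?thesis
    using qint_cis[of "pi / r"] qint_cis[of "- (pi / r)"] sin_pi_div_pos by (auto simp: qreal_def)
qed

lemma qreal_1 [simp]: "qreal r 1 = 1"
  using sin_pi_div_pos by (simp add: qreal_def)

lemma qreal_recurrence: "qreal r (d + 1) + qreal r (d - 1) = qreal r 2 * qreal r d"
proof -
  define x where "x = pi / r"
  have "sin (of_int (d + 1) * x) + sin (of_int (d - 1) * x) = 2 * cos x * sin (of_int d * x)"
    by (simp add: algebra_simps sin_add sin_diff)
  moreover have "sin (of_int 2 * x) = 2 * sin x * cos x"
    by (simp add: sin_double)
  ultimately show ?thesis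
    using sin_pi_div_pos unfolding qreal_def x_def[symmetric] by (simp add: field_simps)
qed

lemma qreal_nonneg:
  assumes "0 \<le> d" "d \<le> int r"
  shows "0 \<le> qreal r d"
proof -
  have "of_int d * (pi / r) \<le> r * (pi / r)"
    using assms by (intro mult_right_mono) auto
  then have "0 \<le> sin (of_int d * (pi / r))"
    using assms r by (intro sin_ge_zero) auto
  then show ?thesis
    using sin_pi_div_pos by (simp add: qreal_def)
qed

lemma qreal_pos:
  assumes "1 \<le> d" "d < int r"
  shows "0 < qreal r d"
proof -
  have "of_int d * (pi / r) < r * (pi / r)"
    using assms r by (intro mult_strict_right_mono) auto
  then have "0 < sin (of_int d * (pi / r))"
    using assms r by (intro sin_gt_zero) auto
  then show ?thesis
    using sin_pi_div_pos by (simp add: qreal_def)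
qed

lemma qreal_nonzero: "d \<noteq> 0 \<Longrightarrow> \<bar>d\<bar> < int r \<Longrightarrow> qreal r d \<noteq> 0"
  using qreal_pos[of d] qreal_pos[of "- d"] qreal_uminus[of r d] by (cases "0 < d") auto

end

context
  fixes r :: nat
  assumes r: "3 \<le> r"
begin

lemma qreal_2_pos: "0 < qreal r 2"
  using r by (intro qreal_pos) auto

lemma qalpha_add_r: "qalpha r (d + int r) = qalpha r d"
  using qreal_add_r[of r d] qreal_add_r[of r "d + 1"] r by (simp add: qalpha_def algebra_simps)

lemma qalpha_add_mult_r: "qalpha r (d + int r * j) = qalpha r d"
proof (induction j arbitrary: d rule: int_induct[where k = 0])
  case (step1 i)
  have "qalpha r (d + int r * (i + 1)) = qalpha r ((d + int r * i) + int r)"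
    by (simp add: algebra_simps)
  then show ?case using qalpha_add_r step1 by simp
next
  case (step2 i)
  have "qalpha r (d + int r * i) = qalpha r ((d + int r * (i - 1)) + int r)"
    by (simp add: algebra_simps)
  then show ?case using qalpha_add_r step2 by simp
qed simp

lemma one_minus_qalpha: "qreal r d \<noteq> 0 \<Longrightarrow> 1 - qalpha r d = qreal r (d - 1) / (qreal r 2 * qreal r d)"
  using qreal_recurrence[of r d] qreal_2_pos r by (simp add: qalpha_def field_simps)

lemma qalpha_uminus:
  assumes "qreal r d \<noteq> 0"
  shows "qalpha r (- d) = 1 - qalpha r d"
proof -
  have "qreal r (- d + 1) = - qreal r (d - 1)"
    using qreal_uminus[of r "d - 1"] by simp
  then have "qalpha r (- d) = qreal r (d - 1) / (qreal r 2 * qreal r d)"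
    using qreal_uminus[of r d] by (simp add: qalpha_def)
  then show ?thesis
    using one_minus_qalpha[OF assms] by simp
qed

lemma qalpha_1: "qalpha r 1 = 1"
  using qreal_2_pos r by (simp add: qalpha_def)

lemma qalpha_minus_1: "qalpha r (- 1) = 0"
  by (simp add: qalpha_def)

lemma qalpha_1_minus_r: "qalpha r (1 - int r) = 1"
proof -
  have "qreal r (int r - 1) = 1"
    using qreal_add_r[of r "- 1"] qreal_uminus[of r 1] r by simp
  then have "qalpha r (- (int r - 1)) = 1 - qalpha r (int r - 1)"
    by (intro qalpha_uminus) simp
  moreover have "qalpha r (int r - 1) = 0"
    using qreal_add_r[of r 0] r by (simp add: qalpha_def)
  ultimately show ?thesis by simp
qed

lemma qalpha_times_one_minus_nonneg:
  assumes "d \<noteq> 0" "\<bar>d\<bar> < int r"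
  shows "0 \<le> qalpha r d * (1 - qalpha r d)"
proof -
  have "qalpha r d * (1 - qalpha r d) = qreal r (d + 1) * qreal r (d - 1) / (qreal r 2 * qreal r d)\<^sup>2"
    using one_minus_qalpha[of d] qreal_nonzero[of r d] assms r by (simp add: qalpha_def power2_eq_square)
  moreover have "0 \<le> qreal r (d + 1) * qreal r (d - 1)"
  proof (cases "0 < d")
    case True
    then show ?thesis using qreal_nonneg[of r "d + 1"] qreal_nonneg[of r "d - 1"] assms r by simp
  next
    case False
    then show ?thesis
      using qreal_nonneg[of r "- d - 1"] qreal_nonneg[of r "1 - d"] qreal_uminus[of r "- d - 1"]
        qreal_uminus[of r "1 - d"] assms r by (simp add: algebra_simps)
  qed
  ultimately show ?thesis by simp
qed

end

section \<open>Admissible tableaux as paths of shapes\<close>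

lemma young_adm_length: "young_adm k r mu \<Longrightarrow> length mu = k"
  by (simp add: young_adm_def)

lemma young_adm_antimono: "young_adm k r mu \<Longrightarrow> a \<le> b \<Longrightarrow> b < k \<Longrightarrow> mu ! b \<le> mu ! a"
  by (simp add: young_adm_def young_def)

lemma young_adm_spread: "young_adm k r mu \<Longrightarrow> 0 < k \<Longrightarrow> mu ! 0 \<le> mu ! (k - 1) + (r - k)"
  by (auto simp: young_adm_def)

lemma young_admI:
  assumes "length mu = k" "\<And>a b. a \<le> b \<Longrightarrow> b < k \<Longrightarrow> mu ! b \<le> mu ! a"
    and "0 < k \<Longrightarrow> mu ! 0 \<le> mu ! (k - 1) + (r - k)"
  shows "young_adm k r mu"
  using assms by (auto simp: young_adm_def young_def)

lemma boxes_eq_Sigma: "boxes lam = Sigma {..<length lam} (\<lambda>a. {..<lam ! a})"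
  by (auto simp: boxes_def)

lemma finite_boxes: "finite (boxes lam)"
  by (simp add: boxes_eq_Sigma)

lemma card_boxes: "card (boxes lam) = sum_list lam"
  by (simp add: boxes_eq_Sigma card_SigmaI sum_list_sum_nth atLeast0LessThan)

lemma finite_tabs: "finite (tabs k r lam)"
proof (rule finite_subset)
  show "tabs k r lam \<subseteq> {t. set t \<subseteq> boxes lam \<and> length t = sum_list lam}"
    by (auto simp: tabs_def standard_tableau_def)
  show "finite {t. set t \<subseteq> boxes lam \<and> length t = sum_list lam}"
    by (rule finite_lists_length_eq[OF finite_boxes])
qed

lemma length_tabs: "t \<in> tabs k r lam \<Longrightarrow> length t = sum_list lam"
  by (simp add: tabs_def standard_tableau_def)

lemma distinct_tabs: "t \<in> tabs k r lam \<Longrightarrow> distinct t"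
  by (simp add: tabs_def standard_tableau_def)

lemma length_sub_shape [simp]: "length (sub_shape k t p) = k"
  by (simp add: sub_shape_def)

lemma nth_sub_shape: "a < k \<Longrightarrow> sub_shape k t p ! a = card {m. m < p \<and> fst (t ! m) = a}"
  by (simp add: sub_shape_def)

lemma sub_shape_Suc:
  assumes "a < k"
  shows "sub_shape k t (Suc p) ! a = sub_shape k t p ! a + (if fst (t ! p) = a then 1 else 0)"
proof -
  have "{m. m < Suc p \<and> fst (t ! m) = a} =
      {m. m < p \<and> fst (t ! m) = a} \<union> (if fst (t ! p) = a then {p} else {})"
    by (auto simp: less_Suc_eq)
  then show ?thesis
    using assms by (simp add: nth_sub_shape card_insert_if)
qed

lemma sub_shape_Suc_update:
  "fst (t ! p) < k \<Longrightarrow>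
    sub_shape k t (Suc p) = (sub_shape k t p)[fst (t ! p) := Suc (sub_shape k t p ! fst (t ! p))]"
  by (rule nth_equalityI) (auto simp: sub_shape_Suc nth_list_update)

lemma sub_shape_mono: "p \<le> p' \<Longrightarrow> a < k \<Longrightarrow> sub_shape k t p ! a \<le> sub_shape k t p' ! a"
  unfolding nth_sub_shape by (rule card_mono) auto

lemma sub_shape_strict_mono:
  assumes "p < p'" "fst (t ! p) = a" "a < k"
  shows "sub_shape k t p ! a < sub_shape k t p' ! a"
  using sub_shape_Suc[of a k t p] sub_shape_mono[of "Suc p" p' a k t] assms by simp

lemma sub_shape_cong:
  "(\<And>m. m < p \<Longrightarrow> fst (t' ! m) = fst (t ! m)) \<Longrightarrow> sub_shape k t' p = sub_shape k t p"
  unfolding sub_shape_def by (intro map_cong refl arg_cong[where f = card]) auto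

text \<open>Admissible tableaux as growth sequences of admissible shapes, each entry appended at
  the end of its row (see \<open>tabs_iff_adm_path\<close>).\<close>
definition adm_path :: "nat \<Rightarrow> nat \<Rightarrow> nat list \<Rightarrow> (nat \<times> nat) list \<Rightarrow> bool" where
  "adm_path k r lam t \<longleftrightarrow> sub_shape k t (length t) = lam \<and>
     (\<forall>p \<le> length t. young_adm k r (sub_shape k t p)) \<and>
     (\<forall>m < length t. fst (t ! m) < k \<and> snd (t ! m) = sub_shape k t m ! fst (t ! m))"

lemma adm_pathD:
  assumes "adm_path k r lam t"
  shows "length lam = k" "sub_shape k t (length t) = lam"
    "\<And>p. p \<le> length t \<Longrightarrow> young_adm k r (sub_shape k t p)"
    "\<And>m. m < length t \<Longrightarrow> fst (t ! m) < k"
    "\<And>m. m < length t \<Longrightarrow> snd (t ! m) = sub_shape k t m ! fst (t ! m)"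
  using assms unfolding adm_path_def by auto

lemma adm_path_rows: "adm_path k r lam t \<Longrightarrow> \<forall>x\<in>set t. fst x < k"
  using adm_pathD(4) by (metis in_set_conv_nth)

lemma adm_path_row_bij:
  assumes t: "adm_path k r lam t" and p: "p \<le> length t" and a: "a < k"
  shows "bij_betw (\<lambda>m. snd (t ! m)) {m. m < p \<and> fst (t ! m) = a} {..<sub_shape k t p ! a}"
proof -
  define M where "M = {m. m < p \<and> fst (t ! m) = a}"
  have col: "snd (t ! m) = sub_shape k t m ! a" if "m \<in> M" for m
    using adm_pathD(5)[OF t, of m] that p by (auto simp: M_def)
  have "inj_on (\<lambda>m. snd (t ! m)) M"
  proof (rule inj_onI, rule ccontr)
    fix x y assume xy: "x \<in> M" "y \<in> M" "snd (t ! x) = snd (t ! y)" "x \<noteq> y"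
    then consider "x < y" | "y < x" by linarith
    then show False
      by cases (use xy col a sub_shape_strict_mono[of x y t a k] sub_shape_strict_mono[of y x t a k]
          in \<open>auto simp: M_def\<close>)
  qed
  moreover have "(\<lambda>m. snd (t ! m)) ` M \<subseteq> {..<sub_shape k t p ! a}"
    using col a sub_shape_strict_mono[of _ p t a k] by (auto simp: M_def)
  moreover have "card M = sub_shape k t p ! a"
    using a by (simp add: nth_sub_shape M_def)
  ultimately show ?thesis
    unfolding M_def[symmetric] bij_betw_def
    by (metis card_image card_lessThan card_subset_eq finite_lessThan)
qed

lemma card_adm_path_row:
  assumes "adm_path k r lam t" "p \<le> length t" "a < k"
  shows "card {m. m < p \<and> fst (t ! m) = a \<and> P (snd (t ! m))} = card {c. c < sub_shape k t p ! a \<and> P c}"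
proof -
  have "bij_betw (\<lambda>m. snd (t ! m)) {m \<in> {m. m < p \<and> fst (t ! m) = a}. P (snd (t ! m))}
      {c \<in> {..<sub_shape k t p ! a}. P c}"
    using adm_path_row_bij[OF assms] by (rule bij_betw_Collect) simp
  then show ?thesis
    by (simp add: bij_betw_same_card conj_assoc)
qed

lemma standard_tableau_row_prefix:
  assumes st: "standard_tableau lam t" and m: "m < length t" and tm: "t ! m = (a, c)"
  shows "(\<lambda>m'. snd (t ! m')) ` {m'. m' < m \<and> fst (t ! m') = a} = {..<c}"
proof (intro subset_antisym subsetI)
  have dt: "distinct t" and set_t: "set t = boxes lam"
    and row_order: "\<And>x y. x < length t \<Longrightarrow> y < length t \<Longrightarrow>
       fst (t ! x) = fst (t ! y) \<Longrightarrow> snd (t ! x) < snd (t ! y) \<Longrightarrow> x < y"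
    using st unfolding standard_tableau_def by blast+
  fix x assume "x \<in> (\<lambda>m'. snd (t ! m')) ` {m'. m' < m \<and> fst (t ! m') = a}"
  then obtain m' where m': "m' < m" "fst (t ! m') = a" and x: "x = snd (t ! m')"
    by auto
  have "t ! m' \<noteq> t ! m"
    using m' m dt by (simp add: nth_eq_iff_index_eq)
  moreover have "\<not> c < x"
    using row_order[of m m'] m' m tm x by auto
  ultimately show "x \<in> {..<c}"
    using m' tm x by (auto simp: prod_eq_iff)
next
  have set_t: "set t = boxes lam"
    and row_order: "\<And>x y. x < length t \<Longrightarrow> y < length t \<Longrightarrow>
       fst (t ! x) = fst (t ! y) \<Longrightarrow> snd (t ! x) < snd (t ! y) \<Longrightarrow> x < y"
    using st unfolding standard_tableau_def by blast+
  fix c' assume c': "c' \<in> {..<c}"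
  have "(a, c) \<in> boxes lam"
    using nth_mem[OF m] tm set_t by simp
  then have "(a, c') \<in> set t"
    using set_t c' by (auto simp: boxes_def)
  then obtain m' where m': "m' < length t" "t ! m' = (a, c')"
    by (auto simp: in_set_conv_nth)
  then have "m' < m"
    using row_order[of m' m] m tm c' by auto
  then show "c' \<in> (\<lambda>m'. snd (t ! m')) ` {m'. m' < m \<and> fst (t ! m') = a}"
    using m' by (auto simp: image_iff intro!: bexI[of _ m'])
qed

lemma standard_tableau_col:
  assumes st: "standard_tableau lam t" and m: "m < length t"
  shows "snd (t ! m) = card {m'. m' < m \<and> fst (t ! m') = fst (t ! m)}"
proof -
  obtain a c where tm: "t ! m = (a, c)" by fastforce
  have dt: "distinct t"
    using st unfolding standard_tableau_def by blast
  have "inj_on (\<lambda>m'. snd (t ! m')) {m'. m' < m \<and> fst (t ! m') = a}"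
  proof (rule inj_onI)
    fix x y assume xy: "x \<in> {m'. m' < m \<and> fst (t ! m') = a}" "y \<in> {m'. m' < m \<and> fst (t ! m') = a}"
      "snd (t ! x) = snd (t ! y)"
    then have "t ! x = t ! y"
      by (simp add: prod_eq_iff)
    then show "x = y"
      using xy m dt by (simp add: nth_eq_iff_index_eq)
  qed
  then have "card {m'. m' < m \<and> fst (t ! m') = a} = c"
    using card_image standard_tableau_row_prefix[OF st m tm] by (metis card_lessThan)
  then show ?thesis
    using tm by simp
qed

lemma adm_path_of_tabs:
  assumes len: "length lam = k" and t: "t \<in> tabs k r lam"
  shows "adm_path k r lam t"
proof -
  have st: "standard_tableau lam t" and ad: "adm_tableau k r t"
    using t by (auto simp: tabs_def)
  have dt: "distinct t" and set_t: "set t = boxes lam"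
    using st unfolding standard_tableau_def by blast+
  have row: "fst (t ! m) < k" if "m < length t" for m
    using set_t len nth_mem[OF that] by (auto simp: boxes_def)
  have "sub_shape k t (length t) = lam"
  proof (rule nth_equalityI)
    fix a assume "a < length (sub_shape k t (length t))"
    then have a: "a < k" by simp
    have "bij_betw (nth t) {m. m < length t \<and> fst (t ! m) = a} {x \<in> set t. fst x = a}"
      using bij_betw_Collect[OF bij_betw_nth[OF dt refl refl], of "\<lambda>x. fst x = a"]
      by (simp add: atLeast0LessThan lessThan_def)
    moreover have "{x \<in> set t. fst x = a} = {a} \<times> {..<lam ! a}"
      unfolding set_t using a len by (auto simp: boxes_def)
    ultimately show "sub_shape k t (length t) ! a = lam ! a"
      using a by (simp add: nth_sub_shape bij_betw_same_card)
  qed (use len in simp)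
  moreover have "snd (t ! m) = sub_shape k t m ! fst (t ! m)" if "m < length t" for m
    using standard_tableau_col[OF st that] row[OF that] by (simp add: nth_sub_shape)
  ultimately show ?thesis
    using ad row unfolding adm_path_def adm_tableau_def by simp
qed

lemma adm_path_boxes:
  assumes t: "adm_path k r lam t"
  shows "length t = sum_list lam" "distinct t" "set t = boxes lam"
proof -
  note path = adm_pathD[OF t]
  let ?n = "length t"
  have bij: "bij_betw (\<lambda>m. snd (t ! m)) {m. m < ?n \<and> fst (t ! m) = a} {..<lam ! a}" if "a < k" for a
    using adm_path_row_bij[OF t order.refl that] path(2) by simp
  have "sum_list lam = (\<Sum>a<k. card {m. m < ?n \<and> fst (t ! m) = a})"
    using path(1,2) by (simp add: sum_list_sum_nth atLeast0LessThan nth_sub_shape[symmetric])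
  also have "\<dots> = card (\<Union>a<k. {m. m < ?n \<and> fst (t ! m) = a})"
    by (rule card_UN_disjoint[symmetric]) auto
  also have "(\<Union>a<k. {m. m < ?n \<and> fst (t ! m) = a}) = {..<?n}"
    using path(4) by auto
  finally show len_t: "?n = sum_list lam" by simp
  show dt: "distinct t"
  proof (subst distinct_conv_nth, intro allI impI notI)
    fix x y assume xy: "x < ?n" "y < ?n" "x \<noteq> y" "t ! x = t ! y"
    have "inj_on (\<lambda>m. snd (t ! m)) {m. m < ?n \<and> fst (t ! m) = fst (t ! x)}"
      using bij[OF path(4)[OF xy(1)]] by (rule bij_betw_imp_inj_on)
    then show False
      using xy by (metis (mono_tags, lifting) inj_onD mem_Collect_eq)
  qed
  have "set t \<subseteq> boxes lam"
  proof
    fix x assume "x \<in> set t"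
    then obtain m where m: "m < ?n" "x = t ! m" by (auto simp: in_set_conv_nth)
    then have "snd x < lam ! fst x"
      using bij[OF path(4)[OF m(1)]] by (auto dest: bij_betw_apply)
    moreover have "fst x < length lam"
      using m path(1,4) by simp
    ultimately show "x \<in> boxes lam"
      by (auto simp: boxes_def)
  qed
  then show "set t = boxes lam"
    using card_subset_eq[OF finite_boxes] by (metis card_boxes distinct_card[OF dt] len_t)
qed

lemma adm_path_row_order:
  assumes t: "adm_path k r lam t" and m: "m < length t" "m' < length t"
    and "fst (t ! m) = fst (t ! m')" "snd (t ! m) < snd (t ! m')"
  shows "m < m'"
proof (rule ccontr)
  assume "\<not> m < m'"
  note path = adm_pathD[OF t]
  define a where "a = fst (t ! m)"
  have "sub_shape k t m' ! a \<le> sub_shape k t m ! a"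
    using \<open>\<not> m < m'\<close> path(4) m by (intro sub_shape_mono) (auto simp: a_def)
  moreover have "snd (t ! m) = sub_shape k t m ! a" "snd (t ! m') = sub_shape k t m' ! a"
    using assms(4) path(5) m by (auto simp: a_def)
  ultimately show False
    using assms(5) by linarith
qed

text \<open>Otherwise the shape right after entry \<open>m'\<close> has a longer row \<open>fst (t ! m')\<close> than the
  row \<open>fst (t ! m)\<close> above it.\<close>
lemma adm_path_col_order:
  assumes t: "adm_path k r lam t" and m: "m < length t" "m' < length t"
    and "snd (t ! m) = snd (t ! m')" "fst (t ! m) < fst (t ! m')"
  shows "m < m'"
proof (rule ccontr)
  assume "\<not> m < m'"
  note path = adm_pathD[OF t]
  have "m' < m"
    using \<open>\<not> m < m'\<close> assms(5) by (metis linorder_neqE_nat order_less_irrefl)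
  define a a' where "a = fst (t ! m)" and "a' = fst (t ! m')"
  have aa: "a < a'" "a' < k"
    using assms(5) path(4) m by (auto simp: a_def a'_def)
  have "sub_shape k t (Suc m') ! a' \<le> sub_shape k t (Suc m') ! a"
    using path(3)[of "Suc m'"] \<open>m' < m\<close> m aa by (intro young_adm_antimono) auto
  moreover have "sub_shape k t (Suc m') ! a' = snd (t ! m') + 1"
    using sub_shape_Suc[of a' k t m'] aa path(5)[of m'] m by (simp add: a'_def)
  moreover have "sub_shape k t (Suc m') ! a \<le> sub_shape k t m ! a"
    using \<open>m' < m\<close> aa by (intro sub_shape_mono) auto
  ultimately show False
    using path(5)[of m] m assms(4) by (simp add: a_def)
qed

lemma tabs_of_adm_path:
  assumes t: "adm_path k r lam t"
  shows "t \<in> tabs k r lam"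
proof -
  have "\<forall>m < length t. \<forall>m' < length t.
      ((fst (t ! m) = fst (t ! m') \<and> snd (t ! m) < snd (t ! m')) \<longrightarrow> m < m') \<and>
      ((snd (t ! m) = snd (t ! m') \<and> fst (t ! m) < fst (t ! m')) \<longrightarrow> m < m')"
    using adm_path_row_order[OF t] adm_path_col_order[OF t] by blast
  then have "standard_tableau lam t"
    unfolding standard_tableau_def using adm_path_boxes[OF t] by blast
  moreover have "adm_tableau k r t"
    using adm_pathD(3)[OF t] by (simp add: adm_tableau_def)
  ultimately show ?thesis
    by (simp add: tabs_def)
qed

lemma tabs_iff_adm_path: "length lam = k \<Longrightarrow> t \<in> tabs k r lam \<longleftrightarrow> adm_path k r lam t"
  using adm_path_of_tabs tabs_of_adm_path by blast

section \<open>The \<open>r\<close>-conjugate\<close>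

lemma mod_add_diff_eq_0_iff:
  fixes x l j :: nat
  assumes "j < l"
  shows "(x + (l - j)) mod l = 0 \<longleftrightarrow> x mod l = j"
proof -
  have "(z + (l - j)) mod l = 0 \<longleftrightarrow> z = j" if "z < l" for z
  proof (cases "z < j")
    case True
    then have "z + (l - j) < l" "0 < z + (l - j)"
      using assms by auto
    then show ?thesis
      using True assms by simp
  next
    case False
    then have "z + (l - j) = (z - j) + l"
      using assms by simp
    then have "(z + (l - j)) mod l = z - j"
      using that by (simp only: mod_add_self2) simp
    then show ?thesis
      using False by simp
  qed
  moreover have "(x + (l - j)) mod l = (x mod l + (l - j)) mod l"
    by (simp add: mod_add_left_eq)
  ultimately show ?thesis
    using assms by simp
qed

lemma card_less_mod_eq:
  fixes l j x :: nat
  assumes j: "j < l"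
  shows "card {c. c < x \<and> c mod l = j} = (x + l - Suc j) div l"
proof (induction x)
  case (Suc x)
  have "{c. c < Suc x \<and> c mod l = j} = {c. c < x \<and> c mod l = j} \<union> (if x mod l = j then {x} else {})"
    by (auto simp: less_Suc_eq)
  then have "card {c. c < Suc x \<and> c mod l = j} = (x + l - Suc j) div l + (if x mod l = j then 1 else 0)"
    using Suc.IH by (simp add: card_insert_if)
  also have "\<dots> = Suc (x + l - Suc j) div l"
    using j div_Suc[of "x + l - Suc j" l] mod_add_diff_eq_0_iff[OF j, of x]
    by (simp add: Suc_diff_Suc)
  also have "Suc (x + l - Suc j) = Suc x + l - Suc j"
    using j by simp
  finally show ?case .
qed (use j in simp)

lemma sum_div_add_diff_Suc:
  fixes x l :: nat
  assumes l: "0 < l"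
  shows "(\<Sum>j<l. (x + l - Suc j) div l) = x"
proof -
  have "(\<Sum>j<l. (x + l - Suc j) div l) = (\<Sum>j<l. card {c. c < x \<and> c mod l = j})"
    by (simp add: card_less_mod_eq)
  also have "\<dots> = card (\<Union>j<l. {c. c < x \<and> c mod l = j})"
    by (rule card_UN_disjoint[symmetric]) auto
  also have "(\<Union>j<l. {c. c < x \<and> c mod l = j}) = {..<x}"
    using l by auto
  finally show ?thesis by simp
qed

lemma sum_if_less: "a \<le> k \<Longrightarrow> (\<Sum>x<k. if x < a then Suc b else b) = b * k + a"
proof (induction k)
  case (Suc k)
  show ?case
  proof (cases "a = Suc k")
    case True
    then have "(\<Sum>x<Suc k. if x < a then Suc b else b) = (\<Sum>x<Suc k. Suc b)"
      by (intro sum.cong) auto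
    then show ?thesis
      using True by simp
  qed (use Suc in simp)
qed simp

lemma length_rconj: "length (rconj r lam) = r - length lam"
  by (simp add: rconj_def del: upt_Suc)

lemma rconj_nth:
  assumes "length lam = k" "r = k + l" "j < l"
  shows "rconj r lam ! j = (\<Sum>a<k. (lam ! a + l - Suc j) div l)"
proof -
  have "rconj r lam ! j = (\<Sum>a = 1..k. rtile r lam a (Suc j))"
    using assms by (simp add: rconj_def del: upt_Suc)
  also have "\<dots> = (\<Sum>a<k. rtile r lam (Suc a) (Suc j))"
    by (induction k) (auto simp: sum.atLeast_Suc_atMost)
  finally show ?thesis
    using assms by (simp add: rtile_def)
qed

lemma young_adm_rconj:
  assumes lam: "young_adm k r lam" and r: "r = k + l" and l: "0 < l"
  shows "young_adm l r (rconj r lam)"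
proof (rule young_admI)
  have len: "length lam = k"
    using lam by (rule young_adm_length)
  then show "length (rconj r lam) = l"
    using r by (simp add: length_rconj)
  show "rconj r lam ! j' \<le> rconj r lam ! j" if "j \<le> j'" "j' < l" for j j'
    using that by (simp add: rconj_nth[OF len r] div_le_mono sum_mono)
  have "rconj r lam ! 0 = (\<Sum>a<k. (lam ! a + l - 1) div l)"
    using rconj_nth[OF len r l] by simp
  also have "\<dots> \<le> (\<Sum>a<k. lam ! a div l + 1)"
  proof (rule sum_mono)
    fix a
    have "lam ! a < l * Suc (lam ! a div l)"
      using l by (simp add: dividend_less_times_div mult.commute)
    then have "lam ! a + l - 1 < l * Suc (Suc (lam ! a div l))"
      by (simp add: algebra_simps)
    then have "(lam ! a + l - 1) div l < Suc (Suc (lam ! a div l))"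
      using l by (simp add: div_less_iff_less_mult mult.commute)
    then show "(lam ! a + l - 1) div l \<le> lam ! a div l + 1"
      by simp
  qed
  also have "\<dots> = (\<Sum>a<k. lam ! a div l) + k"
    unfolding sum.distrib by simp
  also have "(\<Sum>a<k. lam ! a div l) = rconj r lam ! (l - 1)"
    using rconj_nth[OF len r, of "l - 1"] l by simp
  finally show "rconj r lam ! 0 \<le> rconj r lam ! (l - 1) + (r - l)"
    using r by simp
qed

text \<open>Such an \<open>h\<close> is \<open>B + 1\<close> on \<open>[0, A)\<close> and \<open>B\<close> on \<open>[A, k)\<close>, so its sum is \<open>B k + A\<close>.\<close>
lemma sum_step_sequence_div:
  fixes h :: "nat \<Rightarrow> nat"
  assumes k: "0 < k" and anti: "\<And>x y. x \<le> y \<Longrightarrow> y < k \<Longrightarrow> h y \<le> h x"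
    and step: "h 0 \<le> h (k - 1) + 1" and a: "a < k"
  shows "((\<Sum>x<k. h x) + k - Suc a) div k = h a"
proof -
  define B where "B = h (k - 1)"
  define A where "A = (LEAST x. h x \<le> B)"
  have hA: "h A \<le> B"
    unfolding A_def by (rule LeastI[of _ "k - 1"]) (simp add: B_def)
  have Ak: "A \<le> k - 1"
    unfolding A_def by (rule Least_le) (simp add: B_def)
  have h: "h x = (if x < A then Suc B else B)" if x: "x < k" for x
  proof (cases "x < A")
    case True
    then have "\<not> h x \<le> B"
      unfolding A_def by (rule not_less_Least)
    moreover have "h x \<le> h 0"
      using anti[of 0 x] x by simp
    ultimately show ?thesis
      using True step by (simp add: B_def)
  next
    case False
    then have "h x \<le> h A"
      using anti[of A x] x by simp
    moreover have "B \<le> h x"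
      using anti[of x "k - 1"] x by (simp add: B_def)
    ultimately show ?thesis
      using False hA by simp
  qed
  have "(\<Sum>x<k. h x) = (\<Sum>x<k. if x < A then Suc B else B)"
    by (intro sum.cong) (auto simp: h)
  also have "\<dots> = B * k + A"
    using Ak k by (intro sum_if_less) simp
  finally have "(\<Sum>x<k. h x) = B * k + A" .
  moreover have "(B * k + A + k - Suc a) div k = (if a < A then Suc B else B)"
    by (rule div_nat_eqI) (use a Ak k in \<open>auto simp: algebra_simps\<close>)
  ultimately show ?thesis
    using h[OF a] by simp
qed

lemma rconj_rconj:
  assumes lam: "young_adm k r lam" and r: "r = k + l" and k: "0 < k" and l: "0 < l"
  shows "rconj r (rconj r lam) = lam"
proof (rule nth_equalityI)
  have len: "length lam = k"
    using lam by (rule young_adm_length)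
  have len': "length (rconj r lam) = l"
    using len r by (simp add: length_rconj)
  show "length (rconj r (rconj r lam)) = length lam"
    using len len' r by (simp add: length_rconj)
  fix a assume "a < length (rconj r (rconj r lam))"
  then have a: "a < k"
    using len len' r by (simp add: length_rconj)
  have "rconj r (rconj r lam) ! a = (\<Sum>j<l. (rconj r lam ! j + k - Suc a) div k)"
    using rconj_nth[OF len', of r k a] r a by (simp add: add.commute)
  also have "\<dots> = (\<Sum>j<l. (lam ! a + l - Suc j) div l)"
  proof (intro sum.cong refl)
    fix j assume "j \<in> {..<l}"
    then have j: "j < l" by simp
    define h where "h x = (lam ! x + l - Suc j) div l" for x
    have "((\<Sum>x<k. h x) + k - Suc a) div k = h a"
    proof (rule sum_step_sequence_div[OF k _ _ a])
      show "h y \<le> h x" if "x \<le> y" "y < k" for x y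
        unfolding h_def using young_adm_antimono[OF lam that] by (intro div_le_mono) simp
      have "h 0 \<le> (lam ! (k - 1) + l - Suc j + l) div l"
        unfolding h_def using young_adm_spread[OF lam k] j r by (intro div_le_mono) simp
      also have "\<dots> = h (k - 1) + 1"
        using l by (simp add: h_def)
      finally show "h 0 \<le> h (k - 1) + 1" .
    qed
    then show "(rconj r lam ! j + k - Suc a) div k = (lam ! a + l - Suc j) div l"
      using rconj_nth[OF len r j] by (simp add: h_def)
  qed
  also have "\<dots> = lam ! a"
    using l by (rule sum_div_add_diff_Suc)
  finally show "rconj r (rconj r lam) ! a = lam ! a" .
qed

context
  fixes k r l a :: nat and mu :: "nat list"
  assumes mu: "young_adm k r mu" and mu': "young_adm k r (mu[a := Suc (mu ! a)])"
    and a: "a < k" and r: "r = k + l"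
begin

lemma young_adm_add_box_nth: "x < k \<Longrightarrow> mu[a := Suc (mu ! a)] ! x = mu ! x + (if x = a then 1 else 0)"
  using young_adm_length[OF mu] by (simp add: nth_list_update)

lemma rows_above_added_box:
  assumes "x < a"
  shows "mu ! a + 1 \<le> mu ! x" "mu ! x \<le> mu ! a + l"
proof -
  show "mu ! a + 1 \<le> mu ! x"
    using young_adm_antimono[OF mu', of x a] young_adm_add_box_nth[of x] young_adm_add_box_nth[of a] assms a
    by simp
  have "mu ! x \<le> mu ! 0" "mu ! (k - 1) \<le> mu ! a"
    using young_adm_antimono[OF mu] assms a by auto
  then show "mu ! x \<le> mu ! a + l"
    using young_adm_spread[OF mu] a r by simp
qed

lemma rows_below_added_box:
  assumes "a \<le> x" "x < k" "0 < l"
  shows "mu ! x \<le> mu ! a" "mu ! a + 1 \<le> mu ! x + l"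
proof -
  show "mu ! x \<le> mu ! a"
    using young_adm_antimono[OF mu] assms by simp
  show "mu ! a + 1 \<le> mu ! x + l"
  proof (cases "x = a")
    case False
    then have "a < x" "k - 1 \<noteq> a" "x \<le> k - 1"
      using assms by auto
    moreover have "mu ! a + 1 \<le> mu ! 0 + (if 0 = a then 1 else 0)"
      using young_adm_antimono[OF mu', of 0 a] young_adm_add_box_nth[of 0] young_adm_add_box_nth[of a] a
      by simp
    ultimately show ?thesis
      using young_adm_spread[OF mu'] young_adm_add_box_nth[of 0] young_adm_add_box_nth[of "k - 1"]
        young_adm_antimono[OF mu, of x "k - 1"] assms r by (auto split: if_splits)
  qed (use assms in simp)
qed

text \<open>The added box, in column \<open>c = mu ! a\<close>, lies in tile column \<open>c mod l\<close> and makes row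
  \<open>c mod l\<close> of the \<open>r\<close>-conjugate one box longer: that row had length \<open>(c div l) k + a\<close>.\<close>
lemma rconj_nth_mod:
  assumes l: "0 < l"
  shows "rconj r mu ! (mu ! a mod l) = mu ! a div l * k + a"
proof -
  define b j where "b = mu ! a div l" and "j = mu ! a mod l"
  have cb: "mu ! a = b * l + j" and jl: "j < l"
    using l by (simp_all add: b_def j_def)
  have "(mu ! x + l - Suc j) div l = (if x < a then Suc b else b)" if "x < k" for x
  proof (cases "x < a")
    case True
    then show ?thesis
      using rows_above_added_box[OF True] cb jl by (simp add: div_nat_eqI algebra_simps)
  next
    case False
    then show ?thesis
      using rows_below_added_box[of x] that l cb jl by (simp add: div_nat_eqI algebra_simps)
  qed
  then have "rconj r mu ! j = (\<Sum>x<k. if x < a then Suc b else b)"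
    using rconj_nth[OF young_adm_length[OF mu] r jl] by simp
  also have "\<dots> = b * k + a"
    using a by (intro sum_if_less) simp
  finally show ?thesis
    by (simp add: j_def b_def)
qed

end

section \<open>Conjugating tableaux box by box\<close>

text \<open>The box in row \<open>a\<close> and column \<open>c\<close> lies in column \<open>c mod l\<close> of the \<open>r\<close>-tile, which
  becomes row \<open>c mod l\<close> of the \<open>r\<close>-conjugate; along that row its boxes are ordered by
  \<open>(c div l, a)\<close>.\<close>
definition conj_box :: "nat \<Rightarrow> nat \<Rightarrow> nat \<times> nat \<Rightarrow> nat \<times> nat" where
  "conj_box k l x = (snd x mod l, snd x div l * k + fst x)"

lemma conj_box_conj_box: "0 < l \<Longrightarrow> fst x < k \<Longrightarrow> conj_box l k (conj_box k l x) = x"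
  by (cases x) (simp add: conj_box_def)

lemma sub_shape_map_conj_box:
  assumes t: "adm_path k r lam t" and l: "0 < l" and r: "r = k + l" and p: "p \<le> length t"
  shows "sub_shape l (map (conj_box k l) t) p = rconj r (sub_shape k t p)"
proof (rule nth_equalityI)
  fix j assume "j < length (sub_shape l (map (conj_box k l) t) p)"
  then have j: "j < l" by simp
  have "{m. m < p \<and> fst (map (conj_box k l) t ! m) = j} =
      (\<Union>a<k. {m. m < p \<and> fst (t ! m) = a \<and> snd (t ! m) mod l = j})"
    using adm_pathD(4)[OF t] p by (auto simp: conj_box_def)
  then have "sub_shape l (map (conj_box k l) t) p ! j =
      (\<Sum>a<k. card {m. m < p \<and> fst (t ! m) = a \<and> snd (t ! m) mod l = j})"
    using j by (simp add: nth_sub_shape) (rule card_UN_disjoint; auto)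
  also have "\<dots> = (\<Sum>a<k. card {c. c < sub_shape k t p ! a \<and> c mod l = j})"
    by (intro sum.cong refl card_adm_path_row[OF t p]) simp
  also have "\<dots> = rconj r (sub_shape k t p) ! j"
    using rconj_nth[of "sub_shape k t p" k r l j] r j by (simp add: card_less_mod_eq)
  finally show "sub_shape l (map (conj_box k l) t) p ! j = rconj r (sub_shape k t p) ! j" .
qed (use r in \<open>simp add: length_rconj\<close>)

lemma adm_path_map_conj_box:
  assumes t: "adm_path k r lam t" and l: "0 < l" and r: "r = k + l"
  shows "adm_path l r (rconj r lam) (map (conj_box k l) t)"
  unfolding adm_path_def
proof (intro conjI allI impI)
  note path = adm_pathD[OF t]
  let ?u = "map (conj_box k l) t"
  show "sub_shape l ?u (length ?u) = rconj r lam"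
    using sub_shape_map_conj_box[OF t l r, of "length t"] path(2) by simp
  show "young_adm l r (sub_shape l ?u p)" if "p \<le> length ?u" for p
    using sub_shape_map_conj_box[OF t l r, of p] young_adm_rconj[OF path(3) r l, of p] that by simp
  fix m assume m: "m < length ?u"
  then show "fst (?u ! m) < l"
    using l by (simp add: conj_box_def)
  define a where "a = fst (t ! m)"
  define mu where "mu = sub_shape k t m"
  have a: "a < k" and m': "m < length t"
    using path(4)[of m] m by (simp_all add: a_def)
  have "rconj r mu ! (mu ! a mod l) = mu ! a div l * k + a"
    using path(3)[of m] path(3)[of "Suc m"] sub_shape_Suc_update[of t m k] a m'
    by (intro rconj_nth_mod[OF _ _ a r l]) (simp_all add: mu_def a_def)
  moreover have "snd (t ! m) = mu ! a"
    using path(5)[OF m'] by (simp add: mu_def a_def)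
  ultimately show "snd (?u ! m) = sub_shape l ?u m ! fst (?u ! m)"
    using sub_shape_map_conj_box[OF t l r, of m] m' by (simp add: conj_box_def mu_def a_def)
qed

lemma map_conj_box_conj_box: "0 < l \<Longrightarrow> \<forall>x\<in>set t. fst x < k \<Longrightarrow> map (conj_box l k) (map (conj_box k l) t) = t"
  by (simp add: conj_box_conj_box map_idI)

lemma map_conj_box_in_tabs_iff:
  assumes lam: "young_adm k r lam" and r: "r = k + l" and k: "0 < k" and l: "0 < l"
    and rows: "\<forall>x\<in>set t. fst x < k"
  shows "map (conj_box k l) t \<in> tabs l r (rconj r lam) \<longleftrightarrow> t \<in> tabs k r lam"
proof
  have len: "length lam = k" and len': "length (rconj r lam) = l"
    using young_adm_length[OF lam] young_adm_length[OF young_adm_rconj[OF lam r l]] .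
  show "t \<in> tabs k r lam" if "map (conj_box k l) t \<in> tabs l r (rconj r lam)"
  proof -
    have "adm_path l r (rconj r lam) (map (conj_box k l) t)"
      using that by (simp add: tabs_iff_adm_path[OF len'])
    then have "adm_path k r (rconj r (rconj r lam)) (map (conj_box l k) (map (conj_box k l) t))"
      by (rule adm_path_map_conj_box[OF _ k]) (simp add: r)
    then show ?thesis
      using rconj_rconj[OF lam r k l] map_conj_box_conj_box[OF l rows] tabs_of_adm_path by simp
  qed
  show "map (conj_box k l) t \<in> tabs l r (rconj r lam)" if "t \<in> tabs k r lam"
    using adm_path_map_conj_box[OF _ l r] that by (simp add: tabs_iff_adm_path[OF len] tabs_iff_adm_path[OF len'])
qed

lemma bij_betw_map_conj_box:
  assumes lam: "young_adm k r lam" and r: "r = k + l" and k: "0 < k" and l: "0 < l"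
  shows "bij_betw (map (conj_box k l)) (tabs k r lam) (tabs l r (rconj r lam))"
proof (rule bij_betw_imageI)
  have len: "length lam = k"
    using young_adm_length[OF lam] .
  have rows: "\<forall>x\<in>set t. fst x < k" if "t \<in> tabs k r lam" for t
    using adm_path_rows adm_path_of_tabs[OF len] that by blast
  show "inj_on (map (conj_box k l)) (tabs k r lam)"
    by (rule inj_on_inverseI[where g = "map (conj_box l k)"]) (use map_conj_box_conj_box[OF l] rows in blast)
  have "u \<in> map (conj_box k l) ` tabs k r lam" if u: "u \<in> tabs l r (rconj r lam)" for u
  proof
    have rows': "\<forall>x\<in>set (map (conj_box l k) u). fst x < k"
      using k by (auto simp: conj_box_def)
    have "map (conj_box k l) (map (conj_box l k) u) = u"
      using map_conj_box_conj_box[OF k] adm_path_rows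
        adm_path_of_tabs[OF young_adm_length[OF young_adm_rconj[OF lam r l]] u] by blast
    then show "u = map (conj_box k l) (map (conj_box l k) u)" by simp
    then show "map (conj_box l k) u \<in> tabs k r lam"
      using map_conj_box_in_tabs_iff[OF lam r k l rows'] u by simp
  qed
  then show "map (conj_box k l) ` tabs k r lam = tabs l r (rconj r lam)"
    using map_conj_box_in_tabs_iff[OF lam r k l] rows by blast
qed

lemma dist_map_conj_box:
  assumes m: "Suc m < length t"
  shows "\<exists>j. dist (map (conj_box k l) t) (Suc m) (Suc (Suc m)) = int (k + l) * j - dist t (Suc m) (Suc (Suc m))"
proof -
  obtain a1 c1 a2 c2 where t1: "t ! m = (a1, c1)" and t2: "t ! Suc m = (a2, c2)"
    by fastforce
  have div_mod: "int c = int (c div l) * int l + int (c mod l)" for c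
    by (simp flip: of_nat_mult of_nat_add)
  have "dist (map (conj_box k l) t) (Suc m) (Suc (Suc m)) =
      (int (c1 div l) * int k + int a1 - (int (c2 div l) * int k + int a2)) -
      (int (c1 mod l) - int (c2 mod l))"
    using m t1 t2 by (simp add: dist_def conj_box_def)
  moreover have "dist t (Suc m) (Suc (Suc m)) = (int c1 - int c2) - (int a1 - int a2)"
    using t1 t2 by (simp add: dist_def)
  ultimately have "dist (map (conj_box k l) t) (Suc m) (Suc (Suc m)) =
      int (k + l) * (int (c1 div l) - int (c2 div l)) - dist t (Suc m) (Suc (Suc m))"
    using div_mod[of c1] div_mod[of c2] by (simp add: algebra_simps)
  then show ?thesis ..
qed

section \<open>Adjacent transpositions\<close>

lemma length_swp [simp]: "length (swp i t) = length t"
  by (simp add: swp_def)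

lemma swp_Suc: "swp (Suc m) t = t[m := t ! Suc m, Suc m := t ! m]"
  by (simp add: swp_def)

lemma nth_swp:
  "Suc m < length t \<Longrightarrow> swp (Suc m) t ! x = (if x = m then t ! Suc m else if x = Suc m then t ! m else t ! x)"
  by (simp add: swp_def nth_list_update)

lemma swp_swp: "Suc m < length t \<Longrightarrow> swp (Suc m) (swp (Suc m) t) = t"
  by (intro nth_equalityI) (auto simp: nth_swp)

lemma swp_neq:
  assumes "Suc m < length t" "distinct t"
  shows "swp (Suc m) t \<noteq> t"
proof
  assume "swp (Suc m) t = t"
  then have "t ! Suc m = t ! m"
    using nth_swp[OF assms(1), of m] by simp
  then show False
    using assms by (simp add: nth_eq_iff_index_eq)
qed

lemma map_swp: "Suc m < length t \<Longrightarrow> map f (swp (Suc m) t) = swp (Suc m) (map f t)"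
  by (simp add: swp_Suc map_update)

lemma set_swp: "Suc m < length t \<Longrightarrow> set (swp (Suc m) t) = set t"
  by (simp add: swp_Suc)

lemma dist_swp:
  "Suc m < length t \<Longrightarrow> dist (swp (Suc m) t) (Suc m) (Suc (Suc m)) = - dist t (Suc m) (Suc (Suc m))"
  by (simp add: dist_def nth_swp)

lemma sub_shape_eq_if_mset_take_eq:
  assumes "p \<le> length t" "p \<le> length t'" "mset (take p t') = mset (take p t)"
  shows "sub_shape k t' p = sub_shape k t p"
proof -
  have count: "card {m. m < p \<and> fst (t ! m) = a} = length (filter (\<lambda>x. fst x = a) (take p t))"
    if "p \<le> length t" for t :: "(nat \<times> nat) list" and a
    using that by (simp add: length_filter_conv_card min_def cong: conj_cong)
  have "length (filter (\<lambda>x. fst x = a) (take p t')) = length (filter (\<lambda>x. fst x = a) (take p t))" for a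
    by (metis assms(3) mset_filter size_mset)
  then show ?thesis
    using assms count by (simp add: sub_shape_def)
qed

lemma sub_shape_swp:
  assumes m: "Suc m < length t" and p: "p \<le> length t" "p \<noteq> Suc m"
  shows "sub_shape k (swp (Suc m) t) p = sub_shape k t p"
proof (cases "p \<le> m")
  case True
  then show ?thesis
    by (intro sub_shape_cong) (simp add: nth_swp[OF m])
next
  case False
  then have "take p (swp (Suc m) t) = (take p t)[m := take p t ! Suc m, Suc m := take p t ! m]"
    using p by (simp add: swp_Suc take_update_swap)
  then have "mset (take p (swp (Suc m) t)) = mset (take p t)"
    using False p mset_swap[of "Suc m" "take p t" m] by simp
  then show ?thesis
    using p by (intro sub_shape_eq_if_mset_take_eq) simp_all
qed

lemma sub_shape_swp_Suc:
  assumes "Suc m < length t" "fst (t ! Suc m) < k"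
  shows "sub_shape k (swp (Suc m) t) (Suc m) =
    (sub_shape k t m)[fst (t ! Suc m) := Suc (sub_shape k t m ! fst (t ! Suc m))]"
  using sub_shape_Suc_update[of "swp (Suc m) t" m k] sub_shape_swp[of m t m k] assms
  by (simp add: nth_swp)

lemma sub_shape_Suc_Suc:
  assumes "a < k"
  shows "sub_shape k t (Suc (Suc p)) ! a =
    sub_shape k t p ! a + (if fst (t ! p) = a then 1 else 0) + (if fst (t ! Suc p) = a then 1 else 0)"
  using sub_shape_Suc[OF assms, of t p] sub_shape_Suc[OF assms, of t "Suc p"] by simp

lemma adm_path_adjacent:
  assumes t: "adm_path k r lam t" and m: "Suc m < length t"
  obtains a1 a2 where "t ! m = (a1, sub_shape k t m ! a1)"
    "t ! Suc m = (a2, sub_shape k t m ! a2 + (if a1 = a2 then 1 else 0))" "a1 < k" "a2 < k"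
proof -
  note path = adm_pathD[OF t]
  define a1 a2 where "a1 = fst (t ! m)" and "a2 = fst (t ! Suc m)"
  have a: "a1 < k" "a2 < k"
    using path(4) m by (auto simp: a1_def a2_def)
  show thesis
  proof (rule that[OF _ _ a])
    show "t ! m = (a1, sub_shape k t m ! a1)"
      using path(5)[of m] m by (simp add: a1_def prod_eq_iff)
    show "t ! Suc m = (a2, sub_shape k t m ! a2 + (if a1 = a2 then 1 else 0))"
      using path(5)[of "Suc m"] sub_shape_Suc[OF a(2), of t m] m by (auto simp: a1_def a2_def prod_eq_iff)
  qed
qed

lemma dist_adm_path_bounds:
  assumes t: "adm_path k r lam t" and k: "k < r" and m: "Suc m < length t"
  shows "dist t (Suc m) (Suc (Suc m)) \<noteq> 0" "\<bar>dist t (Suc m) (Suc (Suc m))\<bar> < int r"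
proof -
  obtain a1 a2 where t1: "t ! m = (a1, sub_shape k t m ! a1)"
    and t2: "t ! Suc m = (a2, sub_shape k t m ! a2 + (if a1 = a2 then 1 else 0))" and a: "a1 < k" "a2 < k"
    using adm_path_adjacent[OF t m] .
  define mu where "mu = sub_shape k t m"
  have mu: "young_adm k r mu"
    using adm_pathD(3)[OF t, of m] m by (simp add: mu_def)
  have d: "dist t (Suc m) (Suc (Suc m)) =
      (int (mu ! a1) - int (mu ! a2 + (if a1 = a2 then 1 else 0))) - (int a1 - int a2)"
    using t1 t2 by (simp add: dist_def mu_def)
  have k0: "0 < k"
    using a by simp
  have spread: "mu ! 0 \<le> mu ! (k - 1) + (r - k)"
    using young_adm_spread[OF mu k0] .
  have anti: "mu ! y \<le> mu ! x" if "x \<le> y" "y < k" for x y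
    using young_adm_antimono[OF mu that] .
  consider "a1 = a2" | "a1 < a2" | "a2 < a1" by linarith
  then have "dist t (Suc m) (Suc (Suc m)) \<noteq> 0 \<and> \<bar>dist t (Suc m) (Suc (Suc m))\<bar> < int r"
  proof cases
    case 1
    then show ?thesis using d k k0 by simp
  next
    case 2
    moreover have "mu ! a2 \<le> mu ! a1" "mu ! a1 \<le> mu ! 0" "mu ! (k - 1) \<le> mu ! a2"
      using 2 a by (auto intro: anti)
    ultimately show ?thesis
      using d spread k a by simp
  next
    case 3
    moreover have "mu ! a1 \<le> mu ! a2" "mu ! a2 \<le> mu ! 0" "mu ! (k - 1) \<le> mu ! a1"
      using 3 a by (auto intro: anti)
    ultimately show ?thesis
      using d spread k a by simp
  qed
  then show "dist t (Suc m) (Suc (Suc m)) \<noteq> 0" "\<bar>dist t (Suc m) (Suc (Suc m))\<bar> < int r"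
    by auto
qed

context
  fixes k r a1 a2 :: nat and mu nu2 :: "nat list"
  assumes mu: "young_adm k r mu" and nu2: "young_adm k r nu2"
    and nu2_nth: "\<And>x. x < k \<Longrightarrow> nu2 ! x = mu ! x + (if x = a1 then 1 else 0) + (if x = a2 then 1 else 0)"
    and a: "a1 < k" "a2 < k" "a1 \<noteq> a2"
begin

lemma second_box_first_nth: "x < k \<Longrightarrow> mu[a2 := Suc (mu ! a2)] ! x = mu ! x + (if x = a2 then 1 else 0)"
  using young_adm_length[OF mu] by (simp add: nth_list_update)

text \<open>A violation can only occur with row \<open>a1\<close> just above row \<open>a2\<close> and of the same length.\<close>
lemma second_box_first_antimono:
  assumes d: "int (mu ! a1) - int (mu ! a2) - (int a1 - int a2) \<noteq> 1" and xy: "x \<le> y" "y < k"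
  shows "mu[a2 := Suc (mu ! a2)] ! y \<le> mu[a2 := Suc (mu ! a2)] ! x"
proof (rule ccontr)
  assume contra: "\<not> ?thesis"
  have anti: "mu ! y' \<le> mu ! x'" "nu2 ! y' \<le> nu2 ! x'" if "x' \<le> y'" "y' < k" for x' y'
    using young_adm_antimono[OF mu that] young_adm_antimono[OF nu2 that] by auto
  have y: "y = a2" "x < a2"
    using contra second_box_first_nth[of x] second_box_first_nth[of y] anti(1)[OF xy] xy
    by (auto split: if_splits)
  then have eq: "mu ! x = mu ! a2"
    using contra second_box_first_nth[of x] second_box_first_nth[of y] anti(1)[of x a2] xy by auto
  then have x: "x = a1"
    using anti(2)[of x a2] nu2_nth[of x] nu2_nth[of a2] y a by (auto split: if_splits)
  show False
  proof (cases "a2 = Suc a1")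
    case True
    then show False using d eq x by simp
  next
    case False
    then have "a1 < Suc a1" "Suc a1 < a2"
      using y x by auto
    then show False
      using anti(2)[of "Suc a1" a2] nu2_nth[of a2] nu2_nth[of "Suc a1"] anti(1)[of a1 "Suc a1"] eq x a
      by simp
  qed
qed

text \<open>A violation can only occur when row \<open>a1\<close> is the last row, row \<open>a2\<close> the first, and
  their lengths differ by exactly \<open>r - k\<close>.\<close>
lemma second_box_first_spread:
  assumes d: "int (mu ! a1) - int (mu ! a2) - (int a1 - int a2) \<noteq> 1 - int r" and k: "k \<le> r" "0 < k"
  shows "mu[a2 := Suc (mu ! a2)] ! 0 \<le> mu[a2 := Suc (mu ! a2)] ! (k - 1) + (r - k)"
proof (cases "a2 = 0 \<and> a1 = k - 1")
  case True
  then show ?thesis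
    using young_adm_spread[OF mu k(2)] second_box_first_nth[of 0] second_box_first_nth[of "k - 1"] d a k
    by auto
next
  case False
  then show ?thesis
    using young_adm_spread[OF mu k(2)] young_adm_spread[OF nu2 k(2)] nu2_nth[of 0] nu2_nth[of "k - 1"]
      second_box_first_nth[of 0] second_box_first_nth[of "k - 1"] a k
    by (auto split: if_splits)
qed

text \<open>Two boxes added in rows \<open>a1\<close> and then \<open>a2\<close> can be added in the opposite order unless
  the second one lies right below the first (content difference \<open>1\<close>) or wraps around from the
  last row to the first (difference \<open>1 - r\<close>).\<close>
lemma young_adm_second_box_first:
  assumes "k \<le> r" "int (mu ! a1) - int (mu ! a2) - (int a1 - int a2) \<notin> {1, 1 - int r}"
  shows "young_adm k r (mu[a2 := Suc (mu ! a2)])"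
  using assms second_box_first_antimono second_box_first_spread young_adm_length[OF mu]
  by (intro young_admI) auto

end

lemma adm_path_swp:
  assumes t: "adm_path k r lam t" and k: "k \<le> r" and m: "Suc m < length t"
    and d: "dist t (Suc m) (Suc (Suc m)) \<notin> {1, - 1, 1 - int r}"
  shows "adm_path k r lam (swp (Suc m) t)"
proof -
  note path = adm_pathD[OF t]
  obtain a1 a2 where t1: "t ! m = (a1, sub_shape k t m ! a1)"
    and t2: "t ! Suc m = (a2, sub_shape k t m ! a2 + (if a1 = a2 then 1 else 0))" and a: "a1 < k" "a2 < k"
    using adm_path_adjacent[OF t m] .
  define mu t' where "mu = sub_shape k t m" and "t' = swp (Suc m) t"
  have a12: "a1 \<noteq> a2"
    using d t1 t2 by (auto simp: dist_def)
  have same: "sub_shape k t' p = sub_shape k t p" if "p \<le> length t" "p \<noteq> Suc m" for p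
    unfolding t'_def using sub_shape_swp[OF m that] .
  have middle: "sub_shape k t' (Suc m) = mu[a2 := Suc (mu ! a2)]"
    using sub_shape_swp_Suc[OF m] t2 a by (simp add: mu_def t'_def)
  have "young_adm k r (mu[a2 := Suc (mu ! a2)])"
  proof (rule young_adm_second_box_first[OF _ _ _ a a12 k])
    show "young_adm k r mu" "young_adm k r (sub_shape k t (Suc (Suc m)))"
      using path(3) m by (simp_all add: mu_def)
    show "sub_shape k t (Suc (Suc m)) ! x = mu ! x + (if x = a1 then 1 else 0) + (if x = a2 then 1 else 0)"
      if "x < k" for x
      using sub_shape_Suc_Suc[OF that, of t m] t1 t2 by (simp add: mu_def)
    show "int (mu ! a1) - int (mu ! a2) - (int a1 - int a2) \<notin> {1, 1 - int r}"
      using d t1 t2 a12 by (simp add: dist_def mu_def)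
  qed
  then have "young_adm k r (sub_shape k t' p)" if "p \<le> length t" for p
    using that same middle path(3) by (cases "p = Suc m") auto
  moreover have "fst (t' ! x) < k \<and> snd (t' ! x) = sub_shape k t' x ! fst (t' ! x)" if "x < length t" for x
    using that same[of x] middle path(4,5)[of x] t1 t2 a a12 m
    by (auto simp: t'_def nth_swp mu_def)
  ultimately show ?thesis
    using same[of "length t"] path(2) m unfolding adm_path_def t'_def[symmetric] by (simp add: t'_def)
qed

section \<open>Signs of tableaux\<close>

fun inversions :: "'a::linorder list \<Rightarrow> nat" where
  "inversions [] = 0"
| "inversions (x # xs) = length (filter (\<lambda>y. y < x) xs) + inversions xs"

lemma odd_inversions_swap_adjacent:
  "Suc m < length xs \<Longrightarrow> xs ! m \<noteq> xs ! Suc m \<Longrightarrow>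
    odd (inversions (xs[m := xs ! Suc m, Suc m := xs ! m]) + inversions xs)"
proof (induction m arbitrary: xs)
  case 0
  then obtain x y zs where "xs = x # y # zs"
    by (cases xs; cases "tl xs") auto
  with 0 show ?case
    by (cases "x < y") auto
next
  case (Suc m)
  then obtain x ys where xs: "xs = x # ys"
    by (cases xs) auto
  have "mset (ys[m := ys ! Suc m, Suc m := ys ! m]) = mset ys"
    using mset_swap[of "Suc m" ys m] Suc.prems xs by simp
  then have "length (filter (\<lambda>y. y < x) (ys[m := ys ! Suc m, Suc m := ys ! m])) =
      length (filter (\<lambda>y. y < x) ys)"
    by (metis mset_filter size_mset)
  then show ?case
    using Suc.IH[of ys] Suc.prems xs by simp
qed

text \<open>Any linear order on the boxes would do for the sign; we use the Cantor pairing.\<close>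
definition tableau_sign :: "(nat \<times> nat) list \<Rightarrow> complex" where
  "tableau_sign t = (- 1) ^ inversions (map prod_encode t)"

lemma tableau_sign_swp:
  assumes "Suc m < length t" "distinct t"
  shows "tableau_sign (swp (Suc m) t) = - tableau_sign t"
proof -
  have "map prod_encode t ! m \<noteq> map prod_encode t ! Suc m"
    using assms by (simp add: nth_eq_iff_index_eq)
  then have "odd (inversions (map prod_encode (swp (Suc m) t)) + inversions (map prod_encode t))"
    using odd_inversions_swap_adjacent[of m "map prod_encode t"] assms by (simp add: swp_Suc map_update)
  then show ?thesis
    by (simp add: tableau_sign_def minus_one_power_iff)
qed

lemma tableau_sign_square: "tableau_sign t * tableau_sign t = 1"
  by (simp add: tableau_sign_def power_mult_distrib[symmetric])

section \<open>Matrices\<close>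

lemma sum_delta_mult: "finite S \<Longrightarrow> u \<in> S \<Longrightarrow> (\<Sum>v\<in>S. (if u = v then 1 else 0) * f v) = (f u :: complex)"
  by (simp add: if_distrib[where f = "\<lambda>x. x * _"] cong: if_cong)

lemma sum_mult_delta: "finite S \<Longrightarrow> w \<in> S \<Longrightarrow> (\<Sum>v\<in>S. f v * (if v = w then 1 else 0)) = (f w :: complex)"
  by (simp add: if_distrib[where f = "\<lambda>x. _ * x"] cong: if_cong)

lemma sum_if_eq_bij_betw:
  assumes "finite A" "bij_betw f A B" "u \<in> B"
  shows "(\<Sum>v\<in>A. if u = f v then g v else 0) = g (inv_into A f u)"
proof -
  have "u = f v \<longleftrightarrow> v = inv_into A f u" if "v \<in> A" for v
    using assms that by (auto simp: bij_betw_def inv_into_f_f f_inv_into_f)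
  then have "(\<Sum>v\<in>A. if u = f v then g v else 0) = (\<Sum>v\<in>A. if v = inv_into A f u then g v else 0)"
    by (intro sum.cong) auto
  also have "\<dots> = g (inv_into A f u)"
    using assms by (simp add: sum.delta' bij_betw_def inv_into_into)
  finally show ?thesis .
qed

lemma mat_inv_eqI:
  assumes fin: "finite S"
    and zero: "\<And>u v. u \<notin> S \<or> v \<notin> S \<Longrightarrow> B u v = 0"
    and left: "\<And>u w. u \<in> S \<Longrightarrow> w \<in> S \<Longrightarrow> (\<Sum>v\<in>S. B u v * A v w) = (if u = w then 1 else 0)"
    and right: "\<And>u w. u \<in> S \<Longrightarrow> w \<in> S \<Longrightarrow> (\<Sum>v\<in>S. A u v * B v w) = (if u = w then 1 else 0)"
  shows "mat_inv S A = B"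
  unfolding mat_inv_def
proof (rule the_equality)
  show "(\<forall>u v. u \<notin> S \<or> v \<notin> S \<longrightarrow> B u v = 0) \<and>
      (\<forall>u\<in>S. \<forall>w\<in>S. (\<Sum>v\<in>S. B u v * A v w) = (if u = w then 1 else 0)) \<and>
      (\<forall>u\<in>S. \<forall>w\<in>S. (\<Sum>v\<in>S. A u v * B v w) = (if u = w then 1 else 0))"
    using zero left right by blast
  fix B' assume B': "(\<forall>u v. u \<notin> S \<or> v \<notin> S \<longrightarrow> B' u v = 0) \<and>
      (\<forall>u\<in>S. \<forall>w\<in>S. (\<Sum>v\<in>S. B' u v * A v w) = (if u = w then 1 else 0)) \<and>
      (\<forall>u\<in>S. \<forall>w\<in>S. (\<Sum>v\<in>S. A u v * B' v w) = (if u = w then 1 else 0))"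
  show "B' = B"
  proof (intro ext)
    fix u w
    show "B' u w = B u w"
    proof (cases "u \<in> S \<and> w \<in> S")
      case True
      have "B' u w = (\<Sum>v\<in>S. B' u v * (if v = w then 1 else 0))"
        using sum_mult_delta[OF fin, of w "B' u"] True by simp
      also have "\<dots> = (\<Sum>v\<in>S. B' u v * (\<Sum>x\<in>S. A v x * B x w))"
        using right True by simp
      also have "\<dots> = (\<Sum>v\<in>S. \<Sum>x\<in>S. B' u v * A v x * B x w)"
        by (simp add: sum_distrib_left mult.assoc)
      also have "\<dots> = (\<Sum>x\<in>S. \<Sum>v\<in>S. B' u v * A v x * B x w)"
        by (rule sum.swap)
      also have "\<dots> = (\<Sum>x\<in>S. (\<Sum>v\<in>S. B' u v * A v x) * B x w)"
        by (simp add: sum_distrib_right)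
      also have "\<dots> = (\<Sum>x\<in>S. (if u = x then 1 else 0) * B x w)"
        using B' True by simp
      also have "\<dots> = B u w"
        using sum_delta_mult[OF fin] True by simp
      finally show ?thesis .
    qed (use B' zero in auto)
  qed
qed

text \<open>Since \<open>E\<close> is idempotent, \<open>(q - (1 + q) E) (1 - (1 + q) E) = q\<close>.\<close>
lemma mat_inv_idempotent:
  fixes E :: "'a \<Rightarrow> 'a \<Rightarrow> complex" and q :: complex
  assumes fin: "finite S" and q: "q \<noteq> 0"
    and idem: "\<And>u w. u \<in> S \<Longrightarrow> w \<in> S \<Longrightarrow> (\<Sum>v\<in>S. E u v * E v w) = E u w"
  shows "mat_inv S (\<lambda>u w. q * (if u = w then 1 else 0) - (1 + q) * E u w) =
    (\<lambda>u w. if u \<in> S \<and> w \<in> S then ((if u = w then 1 else 0) - (1 + q) * E u w) / q else 0)"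
proof (rule mat_inv_eqI[OF fin])
  have product: "(\<Sum>v\<in>S. (a * (if u = v then 1 else 0) - (1 + q) * E u v) *
        (b * (if v = w then 1 else 0) - (1 + q) * E v w)) = q * (if u = w then 1 else 0)"
    if "u \<in> S" "w \<in> S" "a * b = q" "a + b = 1 + q" for u w a b
  proof -
    let ?d = "\<lambda>u v. if u = v then 1 else 0 :: complex"
    have "(\<Sum>v\<in>S. (a * ?d u v - (1 + q) * E u v) * (b * ?d v w - (1 + q) * E v w)) =
        a * b * (\<Sum>v\<in>S. ?d u v * ?d v w) - a * (1 + q) * (\<Sum>v\<in>S. ?d u v * E v w)
        - b * (1 + q) * (\<Sum>v\<in>S. E u v * ?d v w) + (1 + q) * (1 + q) * (\<Sum>v\<in>S. E u v * E v w)"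
      by (simp add: algebra_simps sum.distrib sum_subtractf sum_distrib_left)
    also have "\<dots> = a * b * ?d u w - (a + b) * (1 + q) * E u w + (1 + q) * (1 + q) * E u w"
      using sum_delta_mult[OF fin \<open>u \<in> S\<close>] sum_mult_delta[OF fin \<open>w \<in> S\<close>] idem[OF that(1,2)]
      by (simp add: algebra_simps)
    also have "\<dots> = q * ?d u w"
      using that by (simp add: algebra_simps)
    finally show ?thesis .
  qed
  fix u w assume u: "u \<in> S" and w: "w \<in> S"
  show "(\<Sum>v\<in>S. (if u \<in> S \<and> v \<in> S then ((if u = v then 1 else 0) - (1 + q) * E u v) / q else 0) *
      (q * (if v = w then 1 else 0) - (1 + q) * E v w)) = (if u = w then 1 else 0)"
    using product[OF u w, of 1 q] q u by (simp add: sum_divide_distrib[symmetric])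
  show "(\<Sum>v\<in>S. (q * (if u = v then 1 else 0) - (1 + q) * E u v) *
      (if v \<in> S \<and> w \<in> S then ((if v = w then 1 else 0) - (1 + q) * E v w) / q else 0)) =
      (if u = w then 1 else 0)"
    using product[OF u w, of q 1] q w by (simp add: sum_divide_distrib[symmetric])
qed auto

text \<open>\<open>E\<close> is block diagonal along the orbits of \<open>sw\<close>, with blocks
  \<open>[[al u, be u], [be u, 1 - al u]]\<close> of trace \<open>1\<close> and determinant \<open>0\<close>, or \<open>[al u]\<close> with
  \<open>al u \<in> {0, 1}\<close>; each block is a projection.\<close>
lemma swap_blocks_idempotent:
  fixes E :: "'a \<Rightarrow> 'a \<Rightarrow> complex" and al be :: "'a \<Rightarrow> complex"
  assumes fin: "finite S" and u: "u \<in> S" and w: "w \<in> S"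
    and E: "\<And>u v. u \<in> S \<Longrightarrow> v \<in> S \<Longrightarrow>
      E u v = (if v = u then al u else 0) + (if sw u \<in> S \<and> v = sw u then be u else 0)"
    and sw_neq: "\<And>u. u \<in> S \<Longrightarrow> sw u \<noteq> u"
    and sw_sw: "\<And>u. u \<in> S \<Longrightarrow> sw u \<in> S \<Longrightarrow> sw (sw u) = u"
    and al_sw: "\<And>u. u \<in> S \<Longrightarrow> sw u \<in> S \<Longrightarrow> al (sw u) = 1 - al u"
    and be_sw: "\<And>u. u \<in> S \<Longrightarrow> sw u \<in> S \<Longrightarrow> be (sw u) = be u"
    and be_sq: "\<And>u. u \<in> S \<Longrightarrow> sw u \<in> S \<Longrightarrow> be u * be u = al u * (1 - al u)"
    and al_sq: "\<And>u. u \<in> S \<Longrightarrow> sw u \<notin> S \<Longrightarrow> al u * al u = al u"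
  shows "(\<Sum>v\<in>S. E u v * E v w) = E u w"
proof -
  have row: "(\<Sum>v\<in>S. E u v * X v) = al u * X u + (if sw u \<in> S then be u * X (sw u) else 0)" for X
  proof -
    have "(\<Sum>v\<in>S. E u v * X v) = (\<Sum>v\<in>S. (if v = u then al u * X u else 0) +
        (if sw u \<in> S \<and> v = sw u then be u * X (sw u) else 0))"
      by (intro sum.cong refl) (simp add: E u distrib_right)
    also have "\<dots> = al u * X u + (if sw u \<in> S then be u * X (sw u) else 0)"
      using fin u by (simp add: sum.distrib sum.delta')
    finally show ?thesis .
  qed
  show ?thesis
  proof (cases "sw u \<in> S")
    case True
    have ne: "sw u \<noteq> u"
      using sw_neq u by simp
    have Eu: "E u w = (if w = u then al u else 0) + (if w = sw u then be u else 0)"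
      using E[OF u w] True by simp
    have Esw: "E (sw u) w = (if w = sw u then 1 - al u else 0) + (if w = u then be u else 0)"
      using E[OF True w] sw_sw[OF u True] al_sw[OF u True] be_sw[OF u True] u ne by simp
    show ?thesis
      unfolding row using True ne be_sq[OF u True] Eu Esw by (auto simp: algebra_simps)
  next
    case False
    then show ?thesis
      unfolding row using E[OF u w] al_sq[OF u False] by simp
  qed
qed

section \<open>Level-rank duality\<close>

lemma beta_eq_if_alpha_eq_one_minus:
  assumes "alpha s t' i = 1 - alpha s t i"
  shows "beta s t' i = beta s t i"
proof -
  have "alpha s t' i * (1 - alpha s t' i) = alpha s t i * (1 - alpha s t i)"
    unfolding assms by (simp add: algebra_simps)
  then show ?thesis
    unfolding beta_def by simp
qed

locale level_rank =
  fixes r k l :: nat and s :: complex and lam :: "nat list"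
  assumes r3: "3 \<le> r"
    and s: "s = exp (complex_of_real pi * \<i> / of_nat r) \<or> s = exp (- complex_of_real pi * \<i> / of_nat r)"
    and k: "0 < k" and l: "0 < l" and r: "r = k + l"
    and lam: "young_adm k r lam"
begin

abbreviation "n \<equiv> sum_list lam"
abbreviation "Tk \<equiv> tabs k r lam"
abbreviation "Tl \<equiv> tabs l r (rconj r lam)"
abbreviation "tconj \<equiv> map (conj_box k l)"

lemma length_lam: "length lam = k"
  using lam by (rule young_adm_length)

lemma bij_tconj: "bij_betw tconj Tk Tl"
  using bij_betw_map_conj_box[OF lam r k l] .

lemma adm_path_Tk: "t \<in> Tk \<Longrightarrow> adm_path k r lam t"
  using adm_path_of_tabs[OF length_lam] .

lemma alpha_eq_qalpha: "alpha s t i = of_real (qalpha r (dist t i (Suc i)))"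
  unfolding alpha_def qalpha_def Let_def using qint_eq_qreal[OF _ s] r3 by simp

context
  fixes m assumes m: "Suc m < n"
begin

lemma Suc_less_length: "t \<in> Tk \<Longrightarrow> Suc m < length t"
  using length_tabs m by simp

lemma dist_bounds:
  assumes "t \<in> Tk"
  shows "dist t (Suc m) (Suc (Suc m)) \<noteq> 0" "\<bar>dist t (Suc m) (Suc (Suc m))\<bar> < int r"
  using dist_adm_path_bounds[OF adm_path_Tk[OF assms] _ Suc_less_length[OF assms]] r l by auto

lemma qreal_dist_nonzero: "t \<in> Tk \<Longrightarrow> qreal r (dist t (Suc m) (Suc (Suc m))) \<noteq> 0"
  using qreal_nonzero[OF _ dist_bounds] r3 by simp

lemma alpha_swp: "t \<in> Tk \<Longrightarrow> alpha s (swp (Suc m) t) (Suc m) = 1 - alpha s t (Suc m)"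
  unfolding alpha_eq_qalpha using dist_swp[OF Suc_less_length] qalpha_uminus[OF _ qreal_dist_nonzero] r3 by simp

lemma alpha_tconj:
  assumes t: "t \<in> Tk"
  shows "alpha s (tconj t) (Suc m) = 1 - alpha s t (Suc m)"
proof -
  obtain j where "dist (tconj t) (Suc m) (Suc (Suc m)) = - dist t (Suc m) (Suc (Suc m)) + int r * j"
    using dist_map_conj_box[OF Suc_less_length[OF t], of k l] r by (auto simp: algebra_simps)
  then show ?thesis
    unfolding alpha_eq_qalpha
    using qalpha_add_mult_r[of r "- dist t (Suc m) (Suc (Suc m))" j] qalpha_uminus[OF _ qreal_dist_nonzero[OF t]] r3
    by simp
qed

lemma beta_sq:
  assumes t: "t \<in> Tk"
  shows "beta s t (Suc m) * beta s t (Suc m) = alpha s t (Suc m) * (1 - alpha s t (Suc m))"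
proof -
  define a where "a = qalpha r (dist t (Suc m) (Suc (Suc m)))"
  have "0 \<le> a * (1 - a)"
    unfolding a_def using qalpha_times_one_minus_nonneg[OF _ dist_bounds[OF t]] r3 by simp
  moreover have "alpha s t (Suc m) * (1 - alpha s t (Suc m)) = of_real (a * (1 - a))"
    by (simp add: alpha_eq_qalpha a_def)
  ultimately show ?thesis
    unfolding beta_def by (simp flip: of_real_mult)
qed

lemma alpha_idem:
  assumes t: "t \<in> Tk" and swp: "swp (Suc m) t \<notin> Tk"
  shows "alpha s t (Suc m) * alpha s t (Suc m) = alpha s t (Suc m)"
proof -
  have "dist t (Suc m) (Suc (Suc m)) \<in> {1, - 1, 1 - int r}"
    using adm_path_swp[OF adm_path_Tk[OF t] _ Suc_less_length[OF t]] swp tabs_of_adm_path r by auto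
  then have "qalpha r (dist t (Suc m) (Suc (Suc m))) \<in> {0, 1}"
    using qalpha_1 qalpha_minus_1 qalpha_1_minus_r r3 by auto
  then show ?thesis
    unfolding alpha_eq_qalpha by auto
qed

lemma Emat_idempotent:
  assumes "u \<in> Tk" "w \<in> Tk"
  shows "(\<Sum>v\<in>Tk. Emat s k r lam (Suc m) u v * Emat s k r lam (Suc m) v w) = Emat s k r lam (Suc m) u w"
proof (rule swap_blocks_idempotent[OF finite_tabs assms])
  fix u assume u: "u \<in> Tk"
  show swp_neq: "swp (Suc m) u \<noteq> u"
    using swp_neq[OF Suc_less_length[OF u] distinct_tabs[OF u]] .
  show "swp (Suc m) (swp (Suc m) u) = u"
    using swp_swp[OF Suc_less_length[OF u]] .
  show alpha: "alpha s (swp (Suc m) u) (Suc m) = 1 - alpha s u (Suc m)"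
    using alpha_swp[OF u] .
  then show "beta s (swp (Suc m) u) (Suc m) = beta s u (Suc m)"
    by (rule beta_eq_if_alpha_eq_one_minus)
  show "beta s u (Suc m) * beta s u (Suc m) = alpha s u (Suc m) * (1 - alpha s u (Suc m))"
    using beta_sq[OF u] .
  show "swp (Suc m) u \<notin> Tk \<Longrightarrow> alpha s u (Suc m) * alpha s u (Suc m) = alpha s u (Suc m)"
    using alpha_idem[OF u] .
  fix v assume v: "v \<in> Tk"
  have "v = swp (Suc m) u \<longleftrightarrow> u = swp (Suc m) v"
    using swp_swp[OF Suc_less_length[OF u]] swp_swp[OF Suc_less_length[OF v]] by auto
  then show "Emat s k r lam (Suc m) u v = (if v = u then alpha s u (Suc m) else 0) +
      (if swp (Suc m) u \<in> Tk \<and> v = swp (Suc m) u then beta s u (Suc m) else 0)"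
    using swp_neq beta_eq_if_alpha_eq_one_minus[OF alpha] u v by (auto simp: Emat_def)
qed

lemma mat_inv_rho:
  "mat_inv Tk (rho s k r lam (Suc m)) = (\<lambda>u w. if u \<in> Tk \<and> w \<in> Tk
      then ((if u = w then 1 else 0) - (1 + s\<^sup>2) * Emat s k r lam (Suc m) u w) / s\<^sup>2 else 0)"
proof -
  have "rho s k r lam (Suc m) = (\<lambda>u w. s\<^sup>2 * (if u = w then 1 else 0) - (1 + s\<^sup>2) * Emat s k r lam (Suc m) u w)"
    by (intro ext) (simp add: rho_def)
  moreover have "s\<^sup>2 \<noteq> 0"
    using s by auto
  ultimately show ?thesis
    using mat_inv_idempotent[OF finite_tabs _ Emat_idempotent] by simp
qed

lemma contragr_rho:
  assumes "t \<in> Tk" "t0 \<in> Tk"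
  shows "(- s\<^sup>2) * contragr Tk (rho s k r lam (Suc m)) t0 t =
    - (if t = t0 then 1 else 0) + (1 + s\<^sup>2) * Emat s k r lam (Suc m) t t0"
  using mat_inv_rho assms s by (auto simp: contragr_def field_simps)

lemma swp_tconj: "t \<in> Tk \<Longrightarrow> swp (Suc m) (tconj t) = tconj (swp (Suc m) t)"
  using map_swp[OF Suc_less_length] by simp

lemma rows_swp: "t \<in> Tk \<Longrightarrow> \<forall>x\<in>set (swp (Suc m) t). fst x < k"
  using set_swp[OF Suc_less_length] adm_path_rows[OF adm_path_Tk] by simp

lemma swp_tconj_in_iff: "t \<in> Tk \<Longrightarrow> swp (Suc m) (tconj t) \<in> Tl \<longleftrightarrow> swp (Suc m) t \<in> Tk"
  using map_conj_box_in_tabs_iff[OF lam r k l rows_swp] swp_tconj by simp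

lemma tconj_eq_swp_iff:
  assumes t: "t \<in> Tk" and t0: "t0 \<in> Tk"
  shows "tconj t0 = swp (Suc m) (tconj t) \<longleftrightarrow> t0 = swp (Suc m) t"
  using map_conj_box_conj_box[OF l rows_swp[OF t]] map_conj_box_conj_box[OF l adm_path_rows[OF adm_path_Tk[OF t0]]]
    swp_tconj[OF t] by metis

text \<open>\<open>tconj\<close> turns \<open>alpha\<close> into \<open>1 - alpha\<close> and keeps \<open>beta\<close>; the signs absorb the minus
  sign of the off-diagonal entries.\<close>
lemma rho_tconj:
  assumes t: "t \<in> Tk" and t0: "t0 \<in> Tk"
  shows "tableau_sign t * rho s l r (rconj r lam) (Suc m) (tconj t0) (tconj t) =
    tableau_sign t0 * (- (if t = t0 then 1 else 0) + (1 + s\<^sup>2) * Emat s k r lam (Suc m) t t0)"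
proof -
  have inj: "tconj t0 = tconj t \<longleftrightarrow> t0 = t"
    using bij_tconj t t0 by (auto simp: bij_betw_def inj_on_def)
  consider "t0 = t" | "t0 \<noteq> t" "t0 = swp (Suc m) t" "swp (Suc m) t \<in> Tk"
    | "t0 \<noteq> t" "\<not> (t0 = swp (Suc m) t \<and> swp (Suc m) t \<in> Tk)"
    by blast
  then show ?thesis
  proof cases
    case 1
    then show ?thesis
      by (simp add: rho_def Emat_def alpha_tconj[OF t] algebra_simps)
  next
    case 2
    then have "t = swp (Suc m) t0"
      using swp_swp[OF Suc_less_length[OF t]] by simp
    moreover have "beta s (tconj t) (Suc m) = beta s t (Suc m)" "beta s t0 (Suc m) = beta s t (Suc m)"
      using beta_eq_if_alpha_eq_one_minus alpha_tconj[OF t] alpha_swp[OF t] 2 by auto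
    moreover have "tableau_sign t0 = - tableau_sign t"
      using tableau_sign_swp[OF Suc_less_length[OF t] distinct_tabs[OF t]] 2 by simp
    ultimately show ?thesis
      using 2 inj tconj_eq_swp_iff[OF t t0] swp_tconj_in_iff[OF t] t
      by (simp add: rho_def Emat_def algebra_simps)
  next
    case 3
    then have "\<not> (t = swp (Suc m) t0 \<and> swp (Suc m) t0 \<in> Tk)"
      using swp_swp[OF Suc_less_length[OF t0]] t0 by auto
    then show ?thesis
      using 3 inj tconj_eq_swp_iff[OF t t0] swp_tconj_in_iff[OF t] by (auto simp: rho_def Emat_def)
  qed
qed

end

lemma equiv_reps_contragr:
  "equiv_reps n Tk (\<lambda>i u w. (- s\<^sup>2) * contragr Tk (rho s k r lam i) u w) Tl (rho s l r (rconj r lam))"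
proof -
  define P where "P u v = (if u = tconj v then tableau_sign v else 0)" for u v
  define tinv where "tinv = inv_into Tk tconj"
  have tinv: "tinv u \<in> Tk" "tconj (tinv u) = u" if "u \<in> Tl" for u
    using bij_tconj that unfolding tinv_def
    by (auto simp: bij_betw_def inv_into_into f_inv_into_f)
  have sum_P_mult: "(\<Sum>v\<in>Tk. P u v * X v) = tableau_sign (tinv u) * X (tinv u)" if "u \<in> Tl" for u X
    using sum_if_eq_bij_betw[OF finite_tabs bij_tconj that, of "\<lambda>v. tableau_sign v * X v"]
    by (simp add: P_def tinv_def if_distrib[where f = "\<lambda>x. x * _"] cong: if_cong)
  have sum_mult_P: "(\<Sum>v\<in>Tl. X v * P v t) = X (tconj t) * tableau_sign t" if "t \<in> Tk" for t X
    using bij_betw_apply[OF bij_tconj that] finite_tabs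
    by (simp add: P_def if_distrib[where f = "\<lambda>x. _ * x"] sum.delta cong: if_cong)
  have tinv_tconj: "tinv (tconj t) = t" if "t \<in> Tk" for t
    using bij_tconj that unfolding tinv_def by (simp add: bij_betw_def inv_into_f_f)
  show ?thesis
    unfolding equiv_reps_def
  proof (rule exI[of _ P], rule exI[of _ "\<lambda>v u. P u v"], intro conjI ballI)
    fix u w assume "u \<in> Tl" "w \<in> Tl"
    then show "(\<Sum>v\<in>Tk. P u v * P w v) = (if u = w then 1 else 0)"
      using sum_P_mult tinv tableau_sign_square by (auto simp: P_def)
  next
    fix u w assume u: "u \<in> Tk" and w: "w \<in> Tk"
    then have "tconj u = tconj w \<longleftrightarrow> u = w"
      using tinv_tconj by metis
    then show "(\<Sum>v\<in>Tl. P v u * P v w) = (if u = w then 1 else 0)"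
      using sum_mult_P[OF w, of "\<lambda>v. P v u"] tableau_sign_square by (auto simp: P_def)
  next
    fix i u t assume i: "i \<in> {1..<n}" and u: "u \<in> Tl" and t: "t \<in> Tk"
    then obtain m where m: "Suc m < n" and i: "i = Suc m"
      by (cases i) auto
    have "rho s l r (rconj r lam) i u (tconj t) * tableau_sign t =
        tableau_sign (tinv u) * ((- s\<^sup>2) * contragr Tk (rho s k r lam i) (tinv u) t)"
      using rho_tconj[OF m t tinv(1)[OF u]] contragr_rho[OF m t tinv(1)[OF u]] tinv(2)[OF u] i
      by (simp add: mult.commute)
    then show "(\<Sum>v\<in>Tl. rho s l r (rconj r lam) i u v * P v t) =
        (\<Sum>v\<in>Tk. P u v * ((- s\<^sup>2) * contragr Tk (rho s k r lam i) v t))"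
      using sum_mult_P[OF t] sum_P_mult[OF u, of "\<lambda>v. (- s\<^sup>2) * contragr Tk (rho s k r lam i) v t"]
      by (simp only:)
  qed
qed

end

theorem theorem3p3:
  fixes r k :: nat and s :: complex and lam :: "nat list"
  assumes "r \<ge> 3"
    and "s = exp (complex_of_real pi * \<i> / of_nat r) \<or> s = exp (- complex_of_real pi * \<i> / of_nat r)"
    and "1 \<le> k" and "k \<le> r - 1"
    and "young_adm k r lam"
  shows "young_adm (r - k) r (rconj r lam) \<and>
         equiv_reps (sum_list lam)
           (tabs k r lam)
           (\<lambda>i. (\<lambda>u w. (- s\<^sup>2) * contragr (tabs k r lam) (rho s k r lam i) u w))
           (tabs (r - k) r (rconj r lam))
           (rho s (r - k) r (rconj r lam))"
proof -
  interpret level_rank r k "r - k" s lam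
    using assms by unfold_locales auto
  show ?thesis
    using young_adm_rconj[OF assms(5), of "r - k"] equiv_reps_contragr assms by simp
qed

end
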